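(* Let $P\in\mathcal E_0$ and assume all $\hat f_j,\hat g_l$ are estimated on an auxiliary data set independent of $(\mathbf X^{(n)},\mathbf Y^{(n)},\mathbf Z^{(n)})$. Let $d_X,d_Y$ and all $K(j,l)$ be fixed. Assume there exists $C>0$ with $|w_{jlk}(z)|\le C$ for all $z,j,l,k$. Assume that for all $j,l$: $A_{f,j}A_{g,l}=o_P(n^{-1})$, $B_{f,jl}=o_P(1)$, $B_{g,jl}=o_P(1)$, $\mathbb E_P[\epsilon_{P,j}^2\xi_{P,l}^2w_{jlk}(Z)^2]>0$ for all $k=1,\dots,K(j,l)$, and $\mathbb E_P[\epsilon_{P,j}^2\xi_{P,l}^2]<\infty$. If there exist $j,l$ and $k\in\{1,\dots,K(j,l)\}$ with $\mathbb E_P[\epsilon_{P,j}\xi_{P,l}w_{jlk}(Z)]\ne0$, then $\mathbb P_P(S_n\ge M)\to1$ for all $M>0$.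
   Context: Let $X\in\mathbb R^{d_X}$, $Y\in\mathbb R^{d_Y}$, $Z\in\mathbb R^{d_Z}$ be random vectors; $\mathcal E_0$ is the set of distributions of $(X,Y,Z)$ absolutely continuous with respect to Lebesgue measure. For $P\in\mathcal E_0$: $f_{P,j}(z)=\mathbb E_P[X_j\mid Z=z]$, $g_{P,l}(z)=\mathbb E_P[Y_l\mid Z=z]$, $\epsilon_{P,j}=X_j-f_{P,j}(Z)$, $\xi_{P,l}=Y_l-g_{P,l}(Z)$, $u_{P,j}(z)=\mathbb E_P[\epsilon_{P,j}^2\mid Z=z]$, $v_{P,l}(z)=\mathbb E_P[\xi_{P,l}^2\mid Z=z]$. Data $(x_i,y_i,z_i)$, $i=1,\dots,n$, i.i.d. copies of $(X,Y,Z)$; $\hat f_j,\hat g_l$ estimate $f_{P,j},g_{P,l}$. $A_{f,j}=\frac1n\sum_i(f_{P,j}(z_i)-\hat f_j(z_i))^2$, $A_{g,l}=\frac1n\sum_i(g_{P,l}(z_i)-\hat g_l(z_i))^2$, $B_{f,jl}=\frac1n\sum_i(f_{P,j}(z_i)-\hat f_j(z_i))^2v_{P,l}(z_i)$, $B_{g,jl}=\frac1n\sum_i(g_{P,l}(z_i)-\hat g_l(z_i))^2u_{P,j}(z_i)$. For fixed measurable weight functions $w_{jlk}$, $k=1,\dots,K(j,l)$: $\mathbf R_{jlk}\in\mathbb R^n$ with entries $(x_{ij}-\hat f_j(z_i))(y_{il}-\hat g_l(z_i))w_{jlk}(z_i)$, $\bar{\mathbf R}_{jlk}$ its mean, $T_{jlk}^{(n)}=\sqrt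 n\bar{\mathbf R}_{jlk}/(\frac1n\|\mathbf R_{jlk}\|_2^2-\bar{\mathbf R}_{jlk}^2)^{1/2}$, $S_n=\max_{j,l,k}|T_{jlk}^{(n)}|$. $V_n=o_P(W_n)$ means $\mathbb P_P(|V_n/W_n|>\delta)\to0$ for all $\delta>0$. *)

theory Defs
  imports "HOL-Probability.Probability"
begin

type_synonym ('dx, 'dy, 'dz) obs = "(real^'dx) \<times> (real^'dy) \<times> (real^'dz)"

text \<open>h is a version of the regression function z \<mapsto> E_P[V | Zm = z].\<close>
definition regr_fun :: "'t measure \<Rightarrow> ('t \<Rightarrow> 'z::topological_space) \<Rightarrow> ('t \<Rightarrow> real) \<Rightarrow> ('z \<Rightarrow> real) \<Rightarrow> bool" where
  "regr_fun P Zm V h \<longleftrightarrow> h \<in> borel_measurable borel \<and> integrable P V \<and>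
     integrable P (\<lambda>t. h (Zm t)) \<and>
     (\<forall>A\<in>sets borel. (\<integral>t. indicator A (Zm t) * V t \<partial>P) = (\<integral>t. indicator A (Zm t) * h (Zm t) \<partial>P))"

definition nn_regr_fun :: "'t measure \<Rightarrow> ('t \<Rightarrow> 'z::topological_space) \<Rightarrow> ('t \<Rightarrow> real) \<Rightarrow> ('z \<Rightarrow> real) \<Rightarrow> bool" where
  "nn_regr_fun P Zm V h \<longleftrightarrow> h \<in> borel_measurable borel \<and> (\<forall>z. 0 \<le> h z) \<and>
     (\<forall>A\<in>sets borel. (\<integral>\<^sup>+t. indicator A (Zm t) * ennreal (V t) \<partial>P) = (\<integral>\<^sup>+t. indicator A (Zm t) * ennreal (h (Zm t)) \<partial>P))"

definition oP :: "'o measure \<Rightarrow> (nat \<Rightarrow> 'o \<Rightarrow> real) \<Rightarrow> (nat \<Rightarrow> real) \<Rightarrow> bool" where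
  "oP M V w \<longleftrightarrow> (\<forall>\<delta>>0. (\<lambda>n. measure M {\<omega>\<in>space M. \<delta> < \<bar>V n \<omega> / w n\<bar>}) \<longlonglongrightarrow> 0)"

text \<open>Sample quantities; the sample of size n is dat 0, ..., dat (n-1).\<close>
definition Aerr :: "nat \<Rightarrow> ('z \<Rightarrow> real) \<Rightarrow> ('z \<Rightarrow> real) \<Rightarrow> (nat \<Rightarrow> 'z) \<Rightarrow> real" where
  "Aerr n f fh zs = (\<Sum>i<n. (f (zs i) - fh (zs i))^2) / real n"

definition Berr :: "nat \<Rightarrow> ('z \<Rightarrow> real) \<Rightarrow> ('z \<Rightarrow> real) \<Rightarrow> ('z \<Rightarrow> real) \<Rightarrow> (nat \<Rightarrow> 'z) \<Rightarrow> real" where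
  "Berr n f fh v zs = (\<Sum>i<n. (f (zs i) - fh (zs i))^2 * v (zs i)) / real n"

definition Rvec :: "(real^'dz::finite \<Rightarrow> real) \<Rightarrow> (real^'dz \<Rightarrow> real) \<Rightarrow> (real^'dz \<Rightarrow> real) \<Rightarrow> 'dx::finite \<Rightarrow> 'dy::finite
     \<Rightarrow> (nat \<Rightarrow> ('dx, 'dy, 'dz) obs) \<Rightarrow> nat \<Rightarrow> real" where
  "Rvec fh gh wt j l dat i =
     (fst (dat i) $ j - fh (snd (snd (dat i)))) * (fst (snd (dat i)) $ l - gh (snd (snd (dat i))))
       * wt (snd (snd (dat i)))"

definition Rbar :: "nat \<Rightarrow> (nat \<Rightarrow> real) \<Rightarrow> real" where
  "Rbar n r = (\<Sum>i<n. r i) / real n"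

definition Tstat :: "nat \<Rightarrow> (nat \<Rightarrow> real) \<Rightarrow> real" where
  "Tstat n r = sqrt (real n) * Rbar n r / sqrt ((\<Sum>i<n. (r i)^2) / real n - (Rbar n r)^2)"

definition Sstat :: "nat \<Rightarrow> ('dx::finite \<Rightarrow> 'dy::finite \<Rightarrow> nat \<Rightarrow> real^'dz::finite \<Rightarrow> real) \<Rightarrow> ('dx \<Rightarrow> 'dy \<Rightarrow> nat)
     \<Rightarrow> ('dx \<Rightarrow> real^'dz \<Rightarrow> real) \<Rightarrow> ('dy \<Rightarrow> real^'dz \<Rightarrow> real)
     \<Rightarrow> (nat \<Rightarrow> ('dx, 'dy, 'dz) obs) \<Rightarrow> real" where
  "Sstat n w K fh gh dat =
     Max {\<bar>Tstat n (Rvec (fh j) (gh l) (w j l k) j l dat)\<bar> | j l k. k \<in> {1..K j l}}"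

end

theory Submission
  imports Defs
begin

text \<open>
  Pick (j, l, k) with \<mu> = E[\<epsilon>_j \<xi>_l w(Z)] \<noteq> 0. Since S_n dominates |T_jlk|, it suffices
  that |T_jlk| < c has vanishing probability. Given the auxiliary sample the estimates are fixed
  functions \<phi>, \<gamma>, and every summand of R factors as (\<epsilon> + \<delta>(Z)) (\<xi> + \<rho>(Z)) w(Z) with
  \<delta> = f - \<phi> and \<rho> = g - \<gamma>. Off a few exceptional events the sample mean of R exceeds |\<mu>|/2
  while its second moment stays O(1), which forces |T| \<ge> c for large n. The events are controlled by
  Chebyshev and Markov inequalities: as \<epsilon> and \<xi> are centred given Z, a cross term such as
  \<Sum> \<delta>(Z_i) w(Z_i) \<xi>_i is a sum of orthogonal terms with second moment C^2 \<Sum> \<delta>(Z_i)^2 v(Z_i),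
  which the rate conditions keep of order n, and the product term \<Sum> \<delta>\<rho> w is handled by
  Cauchy-Schwarz. Absolute continuity of P makes a tie R_0 = R_1 \<noteq> 0 a null event, so the sample
  variance is positive.
  Independence of the auxiliary sample finally lets the conditional bound be integrated.
\<close>

section \<open>Conditional expectations\<close>

lemma distr_density_eqI:
  fixes Zm :: "'t \<Rightarrow> 'z::topological_space"
  assumes [measurable]: "Zm \<in> measurable P borel" "a \<in> borel_measurable P" "b \<in> borel_measurable P"
    and eq: "\<And>A. A \<in> sets borel \<Longrightarrow>
      (\<integral>\<^sup>+t. indicator A (Zm t) * a t \<partial>P) = (\<integral>\<^sup>+t. indicator A (Zm t) * b t \<partial>P)"
  shows "distr (density P a) borel Zm = distr (density P b) borel Zm"
proof (rule measure_eqI)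
  fix A assume "A \<in> sets (distr (density P a) borel Zm)"
  then have [measurable]: "A \<in> sets borel" by simp
  have "emeasure (distr (density P c) borel Zm) A = (\<integral>\<^sup>+t. indicator A (Zm t) * c t \<partial>P)"
    if [measurable]: "c \<in> borel_measurable P" for c
    by (simp add: emeasure_distr emeasure_density, intro nn_integral_cong) (auto simp: indicator_def)
  then show "emeasure (distr (density P a) borel Zm) A = emeasure (distr (density P b) borel Zm) A"
    using eq by simp
qed simp

lemma nn_regr_fun_nn_integral:
  fixes Zm :: "'t \<Rightarrow> 'z::topological_space"
  assumes q: "nn_regr_fun P Zm V q"
    and [measurable]: "Zm \<in> measurable P borel" "V \<in> borel_measurable P" "h \<in> borel_measurable borel"
  shows "(\<integral>\<^sup>+t. h (Zm t) * ennreal (V t) \<partial>P) = (\<integral>\<^sup>+t. h (Zm t) * ennreal (q (Zm t)) \<partial>P)"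
proof -
  have [measurable]: "q \<in> borel_measurable borel" using q by (simp add: nn_regr_fun_def)
  have "distr (density P (\<lambda>t. ennreal (V t))) borel Zm = distr (density P (\<lambda>t. ennreal (q (Zm t)))) borel Zm"
    using q by (intro distr_density_eqI) (auto simp: nn_regr_fun_def)
  then have "(\<integral>\<^sup>+z. h z \<partial>distr (density P (\<lambda>t. ennreal (V t))) borel Zm)
      = (\<integral>\<^sup>+z. h z \<partial>distr (density P (\<lambda>t. ennreal (q (Zm t)))) borel Zm)"
    by simp
  then show ?thesis by (simp add: nn_integral_distr nn_integral_density mult.commute)
qed

lemma integrable_indicator_comp_mult:
  fixes p :: "'t \<Rightarrow> real"
  assumes "integrable P p" "Zm \<in> measurable P borel" "A \<in> sets borel"
  shows "integrable P (\<lambda>t. indicator A (Zm t) * p t)"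
  by (rule Bochner_Integration.integrable_bound[OF assms(1)]) (use assms in \<open>auto simp: indicator_def\<close>)

lemma integral_distr_density:
  fixes Zm :: "'t \<Rightarrow> 'z::topological_space" and h :: "'z \<Rightarrow> real"
  assumes [measurable]: "Zm \<in> measurable P borel" "p \<in> borel_measurable P" "h \<in> borel_measurable borel"
    and "\<And>t. 0 \<le> p t"
  shows "(\<integral>z. h z \<partial>distr (density P (\<lambda>t. ennreal (p t))) borel Zm) = (\<integral>t. p t * h (Zm t) \<partial>P)"
proof -
  have "(\<integral>z. h z \<partial>distr (density P (\<lambda>t. ennreal (p t))) borel Zm) = (\<integral>t. h (Zm t) \<partial>density P (\<lambda>t. ennreal (p t)))"
    by (rule integral_distr) auto
  also have "\<dots> = (\<integral>t. p t * h (Zm t) \<partial>P)"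
    by (subst integral_density) (use assms in auto)
  finally show ?thesis .
qed

lemma integral_comp_mult_eq_0:
  fixes Zm :: "'t \<Rightarrow> 'z::topological_space" and r :: "'t \<Rightarrow> real"
  assumes [measurable]: "Zm \<in> measurable P borel" "h \<in> borel_measurable borel"
    and r: "integrable P r"
    and r_ind: "\<And>A. A \<in> sets borel \<Longrightarrow> (\<integral>t. indicator A (Zm t) * r t \<partial>P) = 0"
  shows "(\<integral>t. h (Zm t) * r t \<partial>P) = 0"
proof (cases "integrable P (\<lambda>t. h (Zm t) * r t)")
  case hr: True
  have [measurable]: "r \<in> borel_measurable P" using r by simp
  define rp where "rp t = max (r t) 0" for t
  define rn where "rn t = max (- r t) 0" for t
  have [measurable]: "rp \<in> borel_measurable P" "rn \<in> borel_measurable P"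
    unfolding rp_def rn_def by measurable
  have rp: "integrable P rp" and rn: "integrable P rn"
    unfolding rp_def rn_def using r by (auto intro: integrable_max)
  have rp_nn: "0 \<le> rp t" and rn_nn: "0 \<le> rn t" for t unfolding rp_def rn_def by auto
  have r_split: "r t = rp t - rn t" for t unfolding rp_def rn_def by auto
  note ind_int = integrable_indicator_comp_mult[OF _ \<open>Zm \<in> measurable P borel\<close>]
  have "distr (density P (\<lambda>t. ennreal (rp t))) borel Zm = distr (density P (\<lambda>t. ennreal (rn t))) borel Zm"
  proof (rule distr_density_eqI)
    fix A :: "'z set" assume A[measurable]: "A \<in> sets borel"
    have "(\<integral>t. indicator A (Zm t) * rp t \<partial>P) - (\<integral>t. indicator A (Zm t) * rn t \<partial>P)
        = (\<integral>t. indicator A (Zm t) * r t \<partial>P)"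
      using ind_int[OF rp A] ind_int[OF rn A]
      by (subst Bochner_Integration.integral_diff[symmetric]) (auto simp: r_split algebra_simps)
    then have eq: "(\<integral>t. indicator A (Zm t) * rp t \<partial>P) = (\<integral>t. indicator A (Zm t) * rn t \<partial>P)"
      using r_ind[OF A] by simp
    have nn_eq: "(\<integral>\<^sup>+t. indicator A (Zm t) * ennreal (p t) \<partial>P) = ennreal (\<integral>t. indicator A (Zm t) * p t \<partial>P)"
      if "integrable P p" "\<And>t. 0 \<le> p t" for p
    proof -
      have "(\<integral>\<^sup>+t. indicator A (Zm t) * ennreal (p t) \<partial>P) = (\<integral>\<^sup>+t. ennreal (indicator A (Zm t) * p t) \<partial>P)"
        by (intro nn_integral_cong) (auto simp: indicator_def)
      also have "\<dots> = ennreal (\<integral>t. indicator A (Zm t) * p t \<partial>P)"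
        by (rule nn_integral_eq_integral) (use ind_int[OF that(1) A] that(2) in auto)
      finally show ?thesis .
    qed
    show "(\<integral>\<^sup>+t. indicator A (Zm t) * ennreal (rp t) \<partial>P) = (\<integral>\<^sup>+t. indicator A (Zm t) * ennreal (rn t) \<partial>P)"
      using nn_eq[OF rp rp_nn] nn_eq[OF rn rn_nn] eq by simp
  qed auto
  then have "(\<integral>z. h z \<partial>distr (density P (\<lambda>t. ennreal (rp t))) borel Zm)
      = (\<integral>z. h z \<partial>distr (density P (\<lambda>t. ennreal (rn t))) borel Zm)"
    by simp
  then have parts_eq: "(\<integral>t. rp t * h (Zm t) \<partial>P) = (\<integral>t. rn t * h (Zm t) \<partial>P)"
    using rp_nn rn_nn by (simp add: integral_distr_density)
  have p_int: "integrable P (\<lambda>t. p t * h (Zm t))"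
    if "p \<in> borel_measurable P" "\<And>t. \<bar>p t\<bar> \<le> \<bar>r t\<bar>" for p
  proof (rule Bochner_Integration.integrable_bound[OF hr])
    show "AE t in P. norm (p t * h (Zm t)) \<le> norm (h (Zm t) * r t)"
      using that(2) by (intro AE_I2) (metis abs_ge_zero abs_mult mult.commute mult_right_mono real_norm_def)
  qed (use that in auto)
  have "integrable P (\<lambda>t. rp t * h (Zm t))" "integrable P (\<lambda>t. rn t * h (Zm t))"
    by (auto intro!: p_int simp: rp_def rn_def)
  then have "(\<integral>t. h (Zm t) * r t \<partial>P) = (\<integral>t. rp t * h (Zm t) \<partial>P) - (\<integral>t. rn t * h (Zm t) \<partial>P)"
    by (subst Bochner_Integration.integral_diff[symmetric]) (auto simp: r_split algebra_simps)
  then show ?thesis using parts_eq by simp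
qed (simp add: not_integrable_integral_eq)

lemma regr_fun_residual_orthogonal:
  fixes Zm :: "'t \<Rightarrow> 'z::topological_space"
  assumes f: "regr_fun P Zm V f"
    and [measurable]: "Zm \<in> measurable P borel" "h \<in> borel_measurable borel"
  shows "(\<integral>t. h (Zm t) * (V t - f (Zm t)) \<partial>P) = 0"
proof (rule integral_comp_mult_eq_0[where Zm = Zm and h = h])
  have V: "integrable P V" and fZ: "integrable P (\<lambda>t. f (Zm t))"
    and eq: "\<And>A. A \<in> sets borel \<Longrightarrow> (\<integral>t. indicator A (Zm t) * V t \<partial>P) = (\<integral>t. indicator A (Zm t) * f (Zm t) \<partial>P)"
    using f unfolding regr_fun_def by auto
  show "integrable P (\<lambda>t. V t - f (Zm t))" using V fZ by (rule Bochner_Integration.integrable_diff)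
  fix A :: "'z set" assume A[measurable]: "A \<in> sets borel"
  note ind_int = integrable_indicator_comp_mult[OF _ \<open>Zm \<in> measurable P borel\<close> A]
  have "(\<integral>t. indicator A (Zm t) * (V t - f (Zm t)) \<partial>P)
      = (\<integral>t. indicator A (Zm t) * V t \<partial>P) - (\<integral>t. indicator A (Zm t) * f (Zm t) \<partial>P)"
    unfolding right_diff_distrib by (rule Bochner_Integration.integral_diff[OF ind_int[OF V] ind_int[OF fZ]])
  then show "(\<integral>t. indicator A (Zm t) * (V t - f (Zm t)) \<partial>P) = 0" using eq[OF A] by simp
qed fact+

section \<open>Samples of independent observations\<close>

lemma abs_mult_le_sum_squares: "\<bar>x * y\<bar> \<le> x^2 + (y::real)^2"
proof -
  have "0 \<le> (\<bar>x\<bar> - \<bar>y\<bar>)^2" by simp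
  then have "2 * \<bar>x\<bar> * \<bar>y\<bar> \<le> x^2 + y^2" by (simp add: power2_eq_square algebra_simps)
  moreover have "\<bar>x * y\<bar> \<le> 2 * \<bar>x\<bar> * \<bar>y\<bar>" by (simp add: abs_mult)
  ultimately show ?thesis by linarith
qed

lemma integral_square_sum_orthogonal:
  fixes b :: "'i \<Rightarrow> 'x \<Rightarrow> real"
  assumes "finite I"
    and int: "\<And>i j. i \<in> I \<Longrightarrow> j \<in> I \<Longrightarrow> integrable M (\<lambda>x. b i x * b j x)"
    and orth: "\<And>i j. i \<in> I \<Longrightarrow> j \<in> I \<Longrightarrow> i \<noteq> j \<Longrightarrow> (\<integral>x. b i x * b j x \<partial>M) = 0"
  shows "(\<integral>x. (\<Sum>i\<in>I. b i x)^2 \<partial>M) = (\<Sum>i\<in>I. \<integral>x. (b i x)^2 \<partial>M)"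
proof -
  have "(\<integral>x. (\<Sum>i\<in>I. b i x)^2 \<partial>M) = (\<Sum>i\<in>I. \<Sum>j\<in>I. \<integral>x. b i x * b j x \<partial>M)"
    using int by (simp add: power2_eq_square sum_product integrable_sum)
  also have "\<dots> = (\<Sum>i\<in>I. \<integral>x. b i x * b i x \<partial>M)"
  proof (intro sum.cong refl)
    fix i assume i: "i \<in> I"
    have "(\<Sum>j\<in>I. \<integral>x. b i x * b j x \<partial>M) = (\<Sum>j\<in>I. if j = i then \<integral>x. b i x * b i x \<partial>M else 0)"
      using i by (intro sum.cong) (auto simp: orth)
    then show "(\<Sum>j\<in>I. \<integral>x. b i x * b j x \<partial>M) = (\<integral>x. b i x * b i x \<partial>M)"
      using \<open>finite I\<close> i by simp
  qed
  finally show ?thesis by (simp add: power2_eq_square)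
qed

locale iid_sample =
  fixes P :: "'t measure" and Zm :: "'t \<Rightarrow> 'z::topological_space" and s :: "'z \<Rightarrow> 't"
    and I :: "'i set"
  assumes prob_space_P: "prob_space P" and finite_I: "finite I"
    and Zm_measurable[measurable]: "Zm \<in> measurable P borel"
    and s_measurable[measurable]: "s \<in> measurable borel P" and Zm_s: "\<And>z. Zm (s z) = z"
begin

abbreviation "PI \<equiv> PiM I (\<lambda>_. P)"

sublocale P: prob_space P by (fact prob_space_P)
sublocale PI: prob_space PI by (rule prob_space_PiM) (simp add: prob_space_P)
sublocale product_prob_space "\<lambda>_::'i. P" by unfold_locales

lemma component_measurable[measurable]: "k \<in> I \<Longrightarrow> (\<lambda>d. d k) \<in> measurable PI P"
  by measurable

lemma nn_integral_PI_split:
  assumes "i \<in> I" "F \<in> borel_measurable PI"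
  shows "integral\<^sup>N PI F = (\<integral>\<^sup>+rest. (\<integral>\<^sup>+t. F (rest(i := t)) \<partial>P) \<partial>PiM (I - {i}) (\<lambda>_. P))"
  using product_nn_integral_insert[of "I - {i}" i F] assms finite_I by (simp add: insert_absorb)

lemma integral_PI_split:
  fixes F :: "_ \<Rightarrow> real"
  assumes "i \<in> I" "integrable PI F"
  shows "integral\<^sup>L PI F = (\<integral>rest. (\<integral>t. F (rest(i := t)) \<partial>P) \<partial>PiM (I - {i}) (\<lambda>_. P))"
  using product_integral_insert[where I = "I - {i}" and i = i and f = F] assms finite_I by (simp add: insert_absorb)

lemma distr_PI_component: "i \<in> I \<Longrightarrow> distr PI P (\<lambda>d. d i) = P"
  by (rule PiM_component)

lemma integrable_PI_component:
  fixes G :: "'t \<Rightarrow> real"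
  assumes "i \<in> I" "integrable P G"
  shows "integrable PI (\<lambda>d. G (d i))"
proof -
  have "integrable (distr PI P (\<lambda>d. d i)) G" using assms by (simp add: distr_PI_component)
  then show ?thesis using assms by (subst (asm) integrable_distr_eq) auto
qed

lemma integral_PI_component:
  fixes G :: "'t \<Rightarrow> real"
  shows "i \<in> I \<Longrightarrow> G \<in> borel_measurable P \<Longrightarrow> (\<integral>d. G (d i) \<partial>PI) = integral\<^sup>L P G"
  by (subst (2) distr_PI_component[symmetric]) (auto simp: integral_distr)

lemma update_section_measurable:
  "i \<in> I \<Longrightarrow> rest \<in> space (PiM (I - {i}) (\<lambda>_. P)) \<Longrightarrow> (\<lambda>z. rest(i := s z)) \<in> measurable borel PI"
  by (rule measurable_fun_upd[where J = "I - {i}"]) auto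

lemma update_in_space:
  "i \<in> I \<Longrightarrow> rest \<in> space (PiM (I - {i}) (\<lambda>_. P)) \<Longrightarrow> t \<in> space P \<Longrightarrow> rest(i := t) \<in> space PI"
  using measurable_space[OF measurable_component_update[of rest "I - {i}" "\<lambda>_. P" i]] by (simp add: insert_absorb)

text \<open>
  In the next two lemmas H depends on the i-th observation only through its covariate; this is
  phrased with the section s of Zm. Conditioning on the covariate then replaces the residual by its
  conditional moment.\<close>

lemma nn_integral_PI_cond_square:
  assumes q: "nn_regr_fun P Zm (\<lambda>t. (r t)^2) q" and [measurable]: "r \<in> borel_measurable P"
    and i: "i \<in> I" and [measurable]: "H \<in> borel_measurable PI"
    and H: "\<And>d t. H (d(i := t)) = H (d(i := s (Zm t)))"
  shows "(\<integral>\<^sup>+d. H d * ennreal ((r (d i))^2) \<partial>PI) = (\<integral>\<^sup>+d. H d * ennreal (q (Zm (d i))) \<partial>PI)"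
proof -
  have [measurable]: "q \<in> borel_measurable borel" using q by (simp add: nn_regr_fun_def)
  have "(\<integral>\<^sup>+t. H (rest(i := t)) * ennreal ((r t)^2) \<partial>P) = (\<integral>\<^sup>+t. H (rest(i := t)) * ennreal (q (Zm t)) \<partial>P)"
    if "rest \<in> space (PiM (I - {i}) (\<lambda>_. P))" for rest
    using nn_regr_fun_nn_integral[OF q, of "\<lambda>z. H (rest(i := s z))"]
      update_section_measurable[OF i that] by (simp add: H[of rest, symmetric])
  then show ?thesis using i by (simp add: nn_integral_PI_split cong: nn_integral_cong)
qed

lemma integral_PI_cond_centred:
  assumes f: "regr_fun P Zm V f"
    and i: "i \<in> I" and [measurable]: "H \<in> borel_measurable PI"
    and H: "\<And>d t. H (d(i := t)) = H (d(i := s (Zm t)))"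
    and int: "integrable PI (\<lambda>d. H d * (V (d i) - f (Zm (d i))))"
  shows "(\<integral>d. H d * (V (d i) - f (Zm (d i))) \<partial>PI) = 0"
proof -
  have "(\<integral>t. H (rest(i := t)) * (V t - f (Zm t)) \<partial>P) = 0"
    if "rest \<in> space (PiM (I - {i}) (\<lambda>_. P))" for rest
    using regr_fun_residual_orthogonal[OF f Zm_measurable, of "\<lambda>z. H (rest(i := s z))"]
      update_section_measurable[OF i that] by (simp add: H[of rest, symmetric])
  then show ?thesis using i int by (simp add: integral_PI_split cong: Bochner_Integration.integral_cong)
qed

text \<open>
  Chebyshev's inequality is applied on the event where the proxy \<Sum> \<phi>(Z_k)^2 q(Z_k) of the conditional
  variance is at most B. This event depends on the sample only through the covariates, so it does
  not disturb the conditional centring of the residuals.\<close>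

definition truncation :: "('z \<Rightarrow> real) \<Rightarrow> ('z \<Rightarrow> real) \<Rightarrow> real \<Rightarrow> ('i \<Rightarrow> 't) \<Rightarrow> real" where
  "truncation \<phi> q B d = of_bool ((\<Sum>k\<in>I. (\<phi> (Zm (d k)))^2 * q (Zm (d k))) \<le> B)"

lemma truncation_measurable[measurable]:
  assumes [measurable]: "\<phi> \<in> borel_measurable borel" "q \<in> borel_measurable borel"
  shows "truncation \<phi> q B \<in> borel_measurable PI"
  unfolding truncation_def by measurable

lemma truncation_upd_section: "i \<in> I \<Longrightarrow> truncation \<phi> q B (d(i := s (Zm t))) = truncation \<phi> q B (d(i := t))"
  unfolding truncation_def by (simp add: Zm_s if_distrib[of Zm] cong: if_cong)

lemma truncation_nonneg: "0 \<le> truncation \<phi> q B d"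
  by (simp add: truncation_def)

lemma truncated_weighted_square_sum:
  fixes \<phi> q :: "'z \<Rightarrow> real" and r :: "'t \<Rightarrow> real"
  assumes q: "nn_regr_fun P Zm (\<lambda>t. (r t)^2) q"
    and [measurable]: "r \<in> borel_measurable P" "\<phi> \<in> borel_measurable borel" and B: "0 \<le> B"
  defines "u \<equiv> \<lambda>d. truncation \<phi> q B d * (\<Sum>k\<in>I. (\<phi> (Zm (d k)))^2 * (r (d k))^2)"
  shows "integrable PI u" and "(\<integral>d. u d \<partial>PI) \<le> B"
proof -
  have [measurable]: "q \<in> borel_measurable borel" and q_nn: "\<And>z. 0 \<le> q z"
    using q by (auto simp: nn_regr_fun_def)
  have [measurable]: "u \<in> borel_measurable PI" unfolding u_def by measurable
  have u_nn: "0 \<le> u d" for d unfolding u_def by (intro mult_nonneg_nonneg sum_nonneg truncation_nonneg) auto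
  have ennreal_trunc_sum: "ennreal (truncation \<phi> q B d * (\<Sum>k\<in>I. (\<phi> (Zm (d k)))^2 * p k))
      = (\<Sum>k\<in>I. ennreal (truncation \<phi> q B d * (\<phi> (Zm (d k)))^2) * ennreal (p k))"
    if "\<And>k. 0 \<le> p k" for d p
    using that truncation_nonneg
    by (simp add: sum_distrib_left sum_ennreal[symmetric] ennreal_mult'' mult.assoc del: sum_ennreal)
  have "(\<integral>\<^sup>+d. u d \<partial>PI) = (\<Sum>k\<in>I. \<integral>\<^sup>+d. ennreal (truncation \<phi> q B d * (\<phi> (Zm (d k)))^2) * ennreal ((r (d k))^2) \<partial>PI)"
    unfolding u_def by (simp add: ennreal_trunc_sum nn_integral_sum)
  also have "\<dots> = (\<Sum>k\<in>I. \<integral>\<^sup>+d. ennreal (truncation \<phi> q B d * (\<phi> (Zm (d k)))^2) * ennreal (q (Zm (d k))) \<partial>PI)"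
    by (intro sum.cong refl nn_integral_PI_cond_square[OF q]) (auto simp: truncation_upd_section Zm_s)
  also have "\<dots> = (\<integral>\<^sup>+d. ennreal (truncation \<phi> q B d * (\<Sum>k\<in>I. (\<phi> (Zm (d k)))^2 * q (Zm (d k)))) \<partial>PI)"
    using q_nn by (simp add: ennreal_trunc_sum nn_integral_sum)
  also have "\<dots> \<le> (\<integral>\<^sup>+d. ennreal B \<partial>PI)"
    using B by (intro nn_integral_mono ennreal_leI) (simp add: truncation_def)
  also have "\<dots> = ennreal B" by (simp add: PI.emeasure_space_1)
  finally have u_le: "(\<integral>\<^sup>+d. u d \<partial>PI) \<le> ennreal B" .
  then show u_int: "integrable PI u"
    using u_nn by (auto simp: integrable_iff_bounded intro: le_less_trans)
  show "(\<integral>d. u d \<partial>PI) \<le> B"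
    using u_le u_nn B by (simp add: nn_integral_eq_integral[OF u_int])
qed

lemma measure_truncated_square_sum_ge:
  fixes \<phi> q :: "'z \<Rightarrow> real" and r :: "'t \<Rightarrow> real"
  assumes q: "nn_regr_fun P Zm (\<lambda>t. (r t)^2) q"
    and r[measurable]: "r \<in> borel_measurable P" and \<phi>[measurable]: "\<phi> \<in> borel_measurable borel"
    and a: "0 < a" and B: "0 \<le> B"
  shows "measure PI {d\<in>space PI. (\<Sum>k\<in>I. (\<phi> (Zm (d k)))^2 * q (Zm (d k))) \<le> B \<and>
            a \<le> (\<Sum>k\<in>I. (\<phi> (Zm (d k)))^2 * (r (d k))^2)} \<le> B / a"
proof -
  have [measurable]: "q \<in> borel_measurable borel" using q by (simp add: nn_regr_fun_def)
  define u where "u d = truncation \<phi> q B d * (\<Sum>k\<in>I. (\<phi> (Zm (d k)))^2 * (r (d k))^2)" for d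
  note u = truncated_weighted_square_sum[OF q r \<phi> B, folded u_def]
  have "measure PI {d\<in>space PI. (\<Sum>k\<in>I. (\<phi> (Zm (d k)))^2 * q (Zm (d k))) \<le> B \<and>
            a \<le> (\<Sum>k\<in>I. (\<phi> (Zm (d k)))^2 * (r (d k))^2)} \<le> measure PI {d\<in>space PI. a \<le> u d}"
    by (intro PI.finite_measure_mono) (auto simp: u_def truncation_def)
  also have "\<dots> \<le> (\<integral>d. u d \<partial>PI) / a"
    using u(1) a by (intro integral_Markov_inequality_measure[where A = "space PI"])
      (auto intro!: AE_I2 mult_nonneg_nonneg sum_nonneg truncation_nonneg simp: u_def)
  also have "\<dots> \<le> B / a" using u(2) a by (simp add: divide_right_mono)
  finally show ?thesis .
qed

lemma truncated_weighted_sum_second_moment: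
  fixes \<phi> q f :: "'z \<Rightarrow> real" and V :: "'t \<Rightarrow> real"
  assumes f: "regr_fun P Zm V f" and q: "nn_regr_fun P Zm (\<lambda>t. (V t - f (Zm t))^2) q"
    and \<phi>[measurable]: "\<phi> \<in> borel_measurable borel" and B: "0 \<le> B"
  defines "S \<equiv> \<lambda>d. \<Sum>k\<in>I. truncation \<phi> q B d * \<phi> (Zm (d k)) * (V (d k) - f (Zm (d k)))"
  shows "integrable PI (\<lambda>d. (S d)^2)" and "(\<integral>d. (S d)^2 \<partial>PI) \<le> B"
proof -
  have [measurable]: "V \<in> borel_measurable P" "f \<in> borel_measurable borel" "q \<in> borel_measurable borel"
    using f q by (auto simp: regr_fun_def nn_regr_fun_def)
  define r where "r t = V t - f (Zm t)" for t
  have r[measurable]: "r \<in> borel_measurable P" unfolding r_def by measurable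
  define u where "u d = truncation \<phi> q B d * (\<Sum>k\<in>I. (\<phi> (Zm (d k)))^2 * (r (d k))^2)" for d
  note u = truncated_weighted_square_sum[OF q[folded r_def] r \<phi> B, folded u_def]
  define b where "b k d = truncation \<phi> q B d * \<phi> (Zm (d k)) * r (d k)" for k d
  have [measurable]: "b k \<in> borel_measurable PI" if "k \<in> I" for k unfolding b_def using that by measurable
  have b_sq: "(b k d)^2 = truncation \<phi> q B d * ((\<phi> (Zm (d k)))^2 * (r (d k))^2)" for k d
    by (simp add: b_def truncation_def power_mult_distrib)
  have b_sq_int: "integrable PI (\<lambda>d. (b k d)^2)" if k: "k \<in> I" for k
  proof (rule Bochner_Integration.integrable_bound[OF u(1)])
    have "0 \<le> (\<Sum>k\<in>I. (\<phi> (Zm (d k)))^2 * (r (d k))^2)" for d by (intro sum_nonneg) auto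
    then show "AE d in PI. norm ((b k d)^2) \<le> norm (u d)"
      using k finite_I by (intro AE_I2) (auto simp: b_sq u_def truncation_def intro!: member_le_sum)
  qed (use k in auto)
  have b_int: "integrable PI (\<lambda>d. b i d * b j d)" if "i \<in> I" "j \<in> I" for i j
    by (rule Bochner_Integration.integrable_bound[of _ "\<lambda>d. (b i d)^2 + (b j d)^2"])
       (use that b_sq_int abs_mult_le_sum_squares in auto)
  \<comment> \<open>the cross terms vanish because r is centred given the covariate\<close>
  have b_orth: "(\<integral>d. b i d * b j d \<partial>PI) = 0" if ij: "i \<in> I" "j \<in> I" "i \<noteq> j" for i j
  proof -
    define H where "H d = truncation \<phi> q B d * \<phi> (Zm (d i)) * b j d" for d
    have [measurable]: "H \<in> borel_measurable PI" unfolding H_def using ij by measurable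
    have H_r: "H d * (V (d i) - f (Zm (d i))) = b i d * b j d" for d
      by (simp add: H_def b_def r_def mult_ac)
    have "H (d(i := t)) = H (d(i := s (Zm t)))" for d t
      using ij not_sym[OF ij(3)] by (simp add: H_def b_def truncation_upd_section Zm_s)
    then have "(\<integral>d. H d * (V (d i) - f (Zm (d i))) \<partial>PI) = 0"
      using b_int[OF ij(1,2)] by (intro integral_PI_cond_centred[OF f ij(1)]) (simp_all add: H_r)
    then show ?thesis by (simp add: H_r)
  qed
  have S_b: "S d = (\<Sum>k\<in>I. b k d)" for d by (simp add: S_def b_def r_def)
  show "integrable PI (\<lambda>d. (S d)^2)"
    unfolding S_b power2_eq_square sum_product by (intro Bochner_Integration.integrable_sum b_int)
  have "(\<integral>d. (S d)^2 \<partial>PI) = (\<Sum>k\<in>I. \<integral>d. (b k d)^2 \<partial>PI)"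
    unfolding S_b by (rule integral_square_sum_orthogonal[OF finite_I b_int b_orth])
  also have "\<dots> = (\<integral>d. (\<Sum>k\<in>I. (b k d)^2) \<partial>PI)"
    by (rule Bochner_Integration.integral_sum[symmetric]) (rule b_sq_int)
  also have "\<dots> = (\<integral>d. u d \<partial>PI)" by (simp add: u_def b_sq sum_distrib_left)
  finally show "(\<integral>d. (S d)^2 \<partial>PI) \<le> B" using u(2) by simp
qed

lemma measure_truncated_sum_ge:
  fixes \<phi> q f :: "'z \<Rightarrow> real" and V :: "'t \<Rightarrow> real"
  assumes f: "regr_fun P Zm V f" and q: "nn_regr_fun P Zm (\<lambda>t. (V t - f (Zm t))^2) q"
    and \<phi>[measurable]: "\<phi> \<in> borel_measurable borel" and a: "0 < a" and B: "0 \<le> B"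
  shows "measure PI {d\<in>space PI. (\<Sum>k\<in>I. (\<phi> (Zm (d k)))^2 * q (Zm (d k))) \<le> B \<and>
            a \<le> \<bar>\<Sum>k\<in>I. \<phi> (Zm (d k)) * (V (d k) - f (Zm (d k)))\<bar>} \<le> B / a^2"
proof -
  have [measurable]: "V \<in> borel_measurable P" "f \<in> borel_measurable borel" "q \<in> borel_measurable borel"
    using f q by (auto simp: regr_fun_def nn_regr_fun_def)
  define S where "S d = (\<Sum>k\<in>I. truncation \<phi> q B d * \<phi> (Zm (d k)) * (V (d k) - f (Zm (d k))))" for d
  note S = truncated_weighted_sum_second_moment[OF f q \<phi> B, folded S_def]
  have "measure PI {d\<in>space PI. (\<Sum>k\<in>I. (\<phi> (Zm (d k)))^2 * q (Zm (d k))) \<le> B \<and>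
            a \<le> \<bar>\<Sum>k\<in>I. \<phi> (Zm (d k)) * (V (d k) - f (Zm (d k)))\<bar>}
      \<le> measure PI {d\<in>space PI. a \<le> \<bar>S d\<bar>}"
    unfolding S_def by (intro PI.finite_measure_mono) (auto simp: truncation_def)
  also have "\<dots> \<le> (\<integral>d. (S d)^2 \<partial>PI) / a^2"
    using S(1) a unfolding S_def by (intro PI.second_moment_method) auto
  also have "\<dots> \<le> B / a^2" using S(2) by (simp add: divide_right_mono)
  finally show ?thesis .
qed

lemma measure_weighted_residual_sum_ge:
  fixes \<delta> w q h :: "'z \<Rightarrow> real" and V :: "'t \<Rightarrow> real"
  assumes h: "regr_fun P Zm V h" and q: "nn_regr_fun P Zm (\<lambda>t. (V t - h (Zm t))^2) q"
    and [measurable]: "\<delta> \<in> borel_measurable borel" "w \<in> borel_measurable borel"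
    and w: "\<And>z. \<bar>w z\<bar> \<le> C" and a: "0 < a" and B: "0 \<le> B"
  shows "measure PI {d\<in>space PI. (\<Sum>k\<in>I. (\<delta> (Zm (d k)))^2 * q (Zm (d k))) \<le> B \<and>
            a \<le> \<bar>\<Sum>k\<in>I. \<delta> (Zm (d k)) * w (Zm (d k)) * (V (d k) - h (Zm (d k)))\<bar>} \<le> C^2 * B / a^2"
proof -
  have q_nn: "0 \<le> q z" for z using q by (simp add: nn_regr_fun_def)
  have [measurable]: "V \<in> borel_measurable P" "h \<in> borel_measurable borel" "q \<in> borel_measurable borel"
    using h q by (auto simp: regr_fun_def nn_regr_fun_def)
  have pointwise: "(\<delta> z * w z)^2 * q z \<le> C^2 * ((\<delta> z)^2 * q z)" for z
    using mult_right_mono[OF power_mono[OF w[of z] abs_ge_zero, of 2], of "(\<delta> z)^2 * q z"] q_nn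
    by (simp add: power_mult_distrib mult_ac)
  then have "(\<Sum>k\<in>I. (\<delta> (Zm (d k)) * w (Zm (d k)))^2 * q (Zm (d k))) \<le> C^2 * B"
    if "(\<Sum>k\<in>I. (\<delta> (Zm (d k)))^2 * q (Zm (d k))) \<le> B" for d
  proof -
    have "(\<Sum>k\<in>I. (\<delta> (Zm (d k)) * w (Zm (d k)))^2 * q (Zm (d k)))
        \<le> C^2 * (\<Sum>k\<in>I. (\<delta> (Zm (d k)))^2 * q (Zm (d k)))"
      unfolding sum_distrib_left by (intro sum_mono pointwise)
    also have "\<dots> \<le> C^2 * B" using that by (intro mult_left_mono) auto
    finally show ?thesis .
  qed
  then have "measure PI {d\<in>space PI. (\<Sum>k\<in>I. (\<delta> (Zm (d k)))^2 * q (Zm (d k))) \<le> B \<and>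
            a \<le> \<bar>\<Sum>k\<in>I. \<delta> (Zm (d k)) * w (Zm (d k)) * (V (d k) - h (Zm (d k)))\<bar>}
      \<le> measure PI {d\<in>space PI. (\<Sum>k\<in>I. (\<delta> (Zm (d k)) * w (Zm (d k)))^2 * q (Zm (d k))) \<le> C^2 * B \<and>
            a \<le> \<bar>\<Sum>k\<in>I. \<delta> (Zm (d k)) * w (Zm (d k)) * (V (d k) - h (Zm (d k)))\<bar>}"
    by (intro PI.finite_measure_mono) (auto, measurable)
  also have "\<dots> \<le> C^2 * B / a^2"
    using B by (intro measure_truncated_sum_ge[OF h q _ a]) auto
  finally show ?thesis .
qed

lemma measure_abs_sum_ge:
  fixes Y :: "'t \<Rightarrow> real"
  assumes [measurable]: "Y \<in> borel_measurable P" and Y_sq: "integrable P (\<lambda>t. (Y t)^2)"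
    and Y_mean: "(\<integral>t. Y t \<partial>P) = 0" and a: "0 < a"
  shows "measure PI {d\<in>space PI. a \<le> \<bar>\<Sum>k\<in>I. Y (d k)\<bar>} \<le> card I * (\<integral>t. (Y t)^2 \<partial>P) / a^2"
proof -
  have Y_sq_int: "integrable PI (\<lambda>d. (Y (d k))^2)" if "k \<in> I" for k
    using integrable_PI_component[OF that Y_sq] by simp
  have Y_int: "integrable PI (\<lambda>d. Y (d i) * Y (d j))" if "i \<in> I" "j \<in> I" for i j
    by (rule Bochner_Integration.integrable_bound[of _ "\<lambda>d. (Y (d i))^2 + (Y (d j))^2"])
       (use that Y_sq_int abs_mult_le_sum_squares in auto)
  have Y_orth: "(\<integral>d. Y (d i) * Y (d j) \<partial>PI) = 0" if ij: "i \<in> I" "j \<in> I" "i \<noteq> j" for i j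
    using integral_PI_split[OF ij(1) Y_int[OF ij(1,2)]] ij Y_mean by simp
  have "(\<integral>d. (\<Sum>k\<in>I. Y (d k))^2 \<partial>PI) = (\<Sum>k\<in>I. \<integral>d. (Y (d k))^2 \<partial>PI)"
    by (rule integral_square_sum_orthogonal[OF finite_I Y_int Y_orth])
  also have "\<dots> = (\<Sum>k\<in>I. \<integral>t. (Y t)^2 \<partial>P)"
    by (intro sum.cong refl integral_PI_component) auto
  also have "\<dots> = card I * (\<integral>t. (Y t)^2 \<partial>P)" by simp
  finally have sum_sq: "(\<integral>d. (\<Sum>k\<in>I. Y (d k))^2 \<partial>PI) = card I * (\<integral>t. (Y t)^2 \<partial>P)" .
  have "measure PI {d\<in>space PI. a \<le> \<bar>\<Sum>k\<in>I. Y (d k)\<bar>} \<le> (\<integral>d. (\<Sum>k\<in>I. Y (d k))^2 \<partial>PI) / a^2"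
  proof (rule PI.second_moment_method[OF _ _ a])
    show "integrable PI (\<lambda>d. (\<Sum>k\<in>I. Y (d k))^2)"
      unfolding power2_eq_square sum_product by (intro Bochner_Integration.integrable_sum Y_int)
  qed simp
  then show ?thesis unfolding sum_sq .
qed

lemma measure_sum_ge:
  fixes V :: "'t \<Rightarrow> real"
  assumes V: "integrable P V" and V_nn: "\<And>t. 0 \<le> V t" and a: "0 < a"
  shows "measure PI {d\<in>space PI. a \<le> (\<Sum>k\<in>I. V (d k))} \<le> card I * (\<integral>t. V t \<partial>P) / a"
proof -
  have [measurable]: "V \<in> borel_measurable P" using V by simp
  have "measure PI {d\<in>space PI. a \<le> (\<Sum>k\<in>I. V (d k))} \<le> (\<integral>d. (\<Sum>k\<in>I. V (d k)) \<partial>PI) / a"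
    using a V_nn
    by (intro integral_Markov_inequality_measure[where A = "space PI"] Bochner_Integration.integrable_sum
        integrable_PI_component V)
       (auto intro: sum_nonneg)
  also have "(\<integral>d. (\<Sum>k\<in>I. V (d k)) \<partial>PI) = (\<Sum>k\<in>I. \<integral>d. V (d k) \<partial>PI)"
    by (rule Bochner_Integration.integral_sum) (auto intro: integrable_PI_component[OF _ V])
  also have "\<dots> = (\<Sum>k\<in>I. \<integral>t. V t \<partial>P)"
    by (intro sum.cong refl integral_PI_component) auto
  also have "\<dots> = card I * (\<integral>t. V t \<partial>P)" by simp
  finally show ?thesis .
qed

lemma ties_null:
  fixes R :: "'t \<Rightarrow> real"
  assumes [measurable]: "R \<in> borel_measurable P" and ij: "i \<in> I" "j \<in> I" "i \<noteq> j"
    and null: "\<And>c. c \<noteq> 0 \<Longrightarrow> {t\<in>space P. R t = c} \<in> null_sets P"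
  shows "{d\<in>space PI. R (d i) = R (d j) \<and> R (d j) \<noteq> 0} \<in> null_sets PI"
proof -
  have [measurable]: "Measurable.pred PI (\<lambda>d. R (d i) = R (d j) \<and> R (d j) \<noteq> 0)"
    using ij unfolding pred_def by (intro sets.sets_Collect_conj borel_measurable_eq) measurable
  have section_null: "(\<integral>\<^sup>+t. indicator {d\<in>space PI. R (d i) = R (d j) \<and> R (d j) \<noteq> 0} (rest(i := t)) \<partial>P) = 0"
    if "rest \<in> space (PiM (I - {i}) (\<lambda>_. P))" for rest
  proof (cases "R (rest j) = 0")
    case False
    have "(\<integral>\<^sup>+t. indicator {d\<in>space PI. R (d i) = R (d j) \<and> R (d j) \<noteq> 0} (rest(i := t)) \<partial>P)
        = (\<integral>\<^sup>+t. indicator {t\<in>space P. R t = R (rest j)} t \<partial>P)"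
      using ij that False update_in_space by (intro nn_integral_cong) (auto simp: indicator_def)
    also have "\<dots> = emeasure P {t\<in>space P. R t = R (rest j)}"
      by (intro nn_integral_indicator) measurable
    finally show ?thesis using null_setsD1[OF null[OF False]] by simp
  qed (use ij in \<open>simp add: indicator_def\<close>)
  have "emeasure PI {d\<in>space PI. R (d i) = R (d j) \<and> R (d j) \<noteq> 0}
      = (\<integral>\<^sup>+d. indicator {d\<in>space PI. R (d i) = R (d j) \<and> R (d j) \<noteq> 0} d \<partial>PI)"
    by (rule nn_integral_indicator[symmetric]) measurable
  also have "\<dots> = (\<integral>\<^sup>+rest. (\<integral>\<^sup>+t. indicator {d\<in>space PI. R (d i) = R (d j) \<and> R (d j) \<noteq> 0} (rest(i := t)) \<partial>P)
      \<partial>PiM (I - {i}) (\<lambda>_. P))"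
    by (rule nn_integral_PI_split[OF ij(1)]) measurable
  also have "\<dots> = 0"
    using section_null by (simp cong: nn_integral_cong)
  finally show ?thesis by (intro null_setsI) auto
qed

end

section \<open>The studentised statistic\<close>

lemma abs_Tstat_ge:
  fixes R :: "nat \<Rightarrow> real"
  assumes n: "2 \<le> n" and no_tie: "\<not> (R 0 = R 1 \<and> R 1 \<noteq> 0)"
    and m: "0 < m" and mean: "m \<le> \<bar>Rbar n R\<bar>"
    and second_moment: "(\<Sum>k<n. (R k)^2) \<le> n * L"
    and c: "0 < c" and cL: "c^2 * L \<le> n * m^2"
  shows "c \<le> \<bar>Tstat n R\<bar>"
proof -
  have n_pos: "0 < real n" using n by simp
  define Rb where "Rb = Rbar n R"
  define s2 where "s2 = (\<Sum>k<n. (R k)^2) / n - Rb^2"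
  have "(\<Sum>k<n. (R k - Rb)^2) = (\<Sum>k<n. (R k)^2 - 2 * Rb * R k + Rb^2)"
    by (intro sum.cong refl) (simp add: power2_diff mult.commute)
  also have "\<dots> = (\<Sum>k<n. (R k)^2) - 2 * Rb * (\<Sum>k<n. R k) + n * Rb^2"
    by (simp add: sum.distrib sum_subtractf sum_distrib_left)
  also have "\<dots> = n * s2"
    using n_pos by (simp add: s2_def Rb_def Rbar_def field_simps power2_eq_square)
  finally have var: "(\<Sum>k<n. (R k - Rb)^2) = n * s2" .
  have s2_pos: "0 < s2"
  proof (rule ccontr)
    assume "\<not> 0 < s2"
    moreover have "0 \<le> n * s2" unfolding var[symmetric] by (intro sum_nonneg) auto
    ultimately have "(\<Sum>k<n. (R k - Rb)^2) = 0" using n_pos var by (simp add: zero_le_mult_iff)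
    then have "R 0 = Rb" "R 1 = Rb" using n by (simp_all add: sum_nonneg_eq_0_iff)
    moreover have "Rb \<noteq> 0" using m mean by (auto simp: Rb_def)
    ultimately show False using no_tie by simp
  qed
  have "s2 \<le> (\<Sum>k<n. (R k)^2) / n" by (simp add: s2_def)
  also have "\<dots> \<le> L" using second_moment n_pos by (simp add: pos_divide_le_eq mult.commute)
  finally have s2_le: "s2 \<le> L" .
  have "c^2 * s2 \<le> c^2 * L" using s2_le by (simp add: mult_left_mono)
  also have "\<dots> \<le> n * m^2" by (fact cL)
  also have "\<dots> \<le> n * Rb^2"
    using power_mono[OF mean[folded Rb_def], of 2] m n_pos by (simp add: mult_left_mono)
  finally have "c^2 \<le> n * Rb^2 / s2" using s2_pos by (simp add: field_simps)
  also have "n * Rb^2 / s2 = (Tstat n R)^2"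
    using s2_pos n_pos unfolding Tstat_def Rb_def[symmetric] s2_def[symmetric]
    by (simp add: power_divide power_mult_distrib)
  finally show ?thesis using c by (metis abs_le_square_iff abs_of_pos)
qed

lemma abs_Rbar_ge_of_decomposition:
  fixes e x \<delta> \<rho> W R :: "nat \<Rightarrow> real"
  assumes R: "\<And>k. R k = (e k + \<delta> k) * (x k + \<rho> k) * W k" and W: "\<And>k. \<bar>W k\<bar> \<le> C"
    and n: "0 < n"
    and main: "\<bar>\<Sum>k<n. e k * x k * W k - \<mu>\<bar> < n * \<bar>\<mu>\<bar> / 8"
    and cross_\<delta>: "\<bar>\<Sum>k<n. \<delta> k * W k * x k\<bar> < n * \<bar>\<mu>\<bar> / 8"
    and cross_\<rho>: "\<bar>\<Sum>k<n. \<rho> k * W k * e k\<bar> < n * \<bar>\<mu>\<bar> / 8"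
    and rates: "(\<Sum>k<n. (\<delta> k)^2) * (\<Sum>k<n. (\<rho> k)^2) \<le> n"
    and n_large: "8 * C \<le> sqrt n * \<bar>\<mu>\<bar>"
  shows "\<bar>\<mu>\<bar> / 2 \<le> \<bar>Rbar n R\<bar>"
proof -
  have C: "0 \<le> C" using W[of 0] by linarith
  have "(\<Sum>k<n. \<bar>\<delta> k * \<rho> k\<bar>)^2 \<le> (\<Sum>k<n. (\<delta> k)^2) * (\<Sum>k<n. (\<rho> k)^2)"
    using Cauchy_Schwarz_ineq_sum[of "\<lambda>k. \<bar>\<delta> k\<bar>" "\<lambda>k. \<bar>\<rho> k\<bar>" "{..<n}"] by (simp add: abs_mult)
  then have "(\<Sum>k<n. \<bar>\<delta> k * \<rho> k\<bar>) \<le> sqrt n"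
    using rates by (meson order_trans real_le_rsqrt)
  have "\<bar>\<Sum>k<n. \<delta> k * \<rho> k * W k\<bar> \<le> (\<Sum>k<n. \<bar>\<delta> k * \<rho> k * W k\<bar>)" by (rule sum_abs)
  also have "\<dots> \<le> (\<Sum>k<n. C * \<bar>\<delta> k * \<rho> k\<bar>)"
    by (intro sum_mono) (metis abs_ge_zero abs_mult mult.commute mult_left_mono W)
  also have "\<dots> \<le> C * sqrt n"
    using C \<open>(\<Sum>k<n. \<bar>\<delta> k * \<rho> k\<bar>) \<le> sqrt n\<close> by (simp add: sum_distrib_left[symmetric] mult_left_mono)
  also have "C * sqrt n \<le> n * \<bar>\<mu>\<bar> / 8"
    using mult_right_mono[OF n_large, of "sqrt n"] by (simp add: mult_ac)
  finally have cross_\<delta>\<rho>: "\<bar>\<Sum>k<n. \<delta> k * \<rho> k * W k\<bar> \<le> n * \<bar>\<mu>\<bar> / 8" .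
  have "(\<Sum>k<n. R k) - n * \<mu> = (\<Sum>k<n. e k * x k * W k - \<mu>) + (\<Sum>k<n. \<delta> k * W k * x k)
      + (\<Sum>k<n. \<rho> k * W k * e k) + (\<Sum>k<n. \<delta> k * \<rho> k * W k)"
    by (simp add: R sum_subtractf sum.distrib[symmetric] algebra_simps)
  then have "\<bar>(\<Sum>k<n. R k) - n * \<mu>\<bar> < n * \<bar>\<mu>\<bar> / 2"
    using main cross_\<delta> cross_\<rho> cross_\<delta>\<rho> by linarith
  then have "n * \<bar>\<mu>\<bar> / 2 \<le> \<bar>\<Sum>k<n. R k\<bar>" by linarith
  then show ?thesis using n by (simp add: Rbar_def field_simps)
qed

lemma square_le_of_decomposition:
  fixes e x \<delta> \<rho> W :: real
  assumes "\<bar>W\<bar> \<le> C"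
  shows "((e + \<delta>) * (x + \<rho>) * W)^2 \<le> 4 * C^2 * ((e * x)^2 + (\<rho> * e)^2 + (\<delta> * x)^2 + \<delta>^2 * \<rho>^2)"
proof -
  have "W^2 \<le> C^2" using power_mono[OF assms abs_ge_zero, of 2] by simp
  moreover have "(e + \<delta>)^2 \<le> 2 * (e^2 + \<delta>^2)" "(x + \<rho>)^2 \<le> 2 * (x^2 + \<rho>^2)"
    using sum_squares_bound[of e \<delta>] sum_squares_bound[of x \<rho>] by (simp_all add: power2_sum)
  ultimately have "(e + \<delta>)^2 * (x + \<rho>)^2 * W^2 \<le> (2 * (e^2 + \<delta>^2)) * (2 * (x^2 + \<rho>^2)) * C^2"
    by (intro mult_mono) auto
  also have "\<dots> = 4 * C^2 * ((e * x)^2 + (\<rho> * e)^2 + (\<delta> * x)^2 + \<delta>^2 * \<rho>^2)"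
    by (simp add: power_mult_distrib algebra_simps)
  finally show ?thesis by (simp add: power_mult_distrib)
qed

lemma sum_square_le_of_decomposition:
  fixes e x \<delta> \<rho> W R :: "nat \<Rightarrow> real"
  assumes R: "\<And>k. R k = (e k + \<delta> k) * (x k + \<rho> k) * W k" and W: "\<And>k. \<bar>W k\<bar> \<le> C"
    and rates: "(\<Sum>k<n. (\<delta> k)^2) * (\<Sum>k<n. (\<rho> k)^2) \<le> n"
    and "(\<Sum>k<n. (e k)^2 * (x k)^2) < n * L" "(\<Sum>k<n. (\<rho> k)^2 * (e k)^2) < n * L"
      "(\<Sum>k<n. (\<delta> k)^2 * (x k)^2) < n * L"
  shows "(\<Sum>k<n. (R k)^2) \<le> n * (4 * C^2 * (3 * L + 1))"
proof -
  have "(\<Sum>k<n. (\<delta> k)^2 * (\<rho> k)^2) \<le> (\<Sum>k<n. (\<delta> k)^2 * (\<Sum>j<n. (\<rho> j)^2))"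
    by (intro sum_mono mult_left_mono member_le_sum) auto
  then have "(\<Sum>k<n. (\<delta> k)^2 * (\<rho> k)^2) \<le> n"
    using rates by (simp add: sum_distrib_right)
  then have "(\<Sum>k<n. (e k * x k)^2 + (\<rho> k * e k)^2 + (\<delta> k * x k)^2 + (\<delta> k)^2 * (\<rho> k)^2)
      \<le> 3 * (n * L) + n"
    using assms(4-6) by (simp add: sum.distrib power_mult_distrib)
  moreover have "(\<Sum>k<n. (R k)^2)
      \<le> 4 * C^2 * (\<Sum>k<n. (e k * x k)^2 + (\<rho> k * e k)^2 + (\<delta> k * x k)^2 + (\<delta> k)^2 * (\<rho> k)^2)"
    unfolding R sum_distrib_left by (intro sum_mono square_le_of_decomposition W)
  ultimately have "(\<Sum>k<n. (R k)^2) \<le> 4 * C^2 * (3 * (n * L) + n)"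
    by (meson order_trans mult_left_mono zero_le_power2 zero_le_mult_iff zero_le_numeral)
  then show ?thesis by (simp add: algebra_simps)
qed

section \<open>One test statistic with fixed estimators\<close>

lemma coordinate_hyperplane_null:
  fixes j :: "'n::finite"
  assumes c: "c \<noteq> 0"
  shows "emeasure lborel {x::real^'n. (x $ j - p) * b = c} = 0"
proof (cases "b = 0")
  case False
  have "{x::real^'n. (x $ j - p) * b = c} = {x. x \<bullet> axis j 1 = p + c / b}"
    using False by (auto simp: cart_eq_inner_axis[symmetric] field_simps)
  moreover have "{x::real^'n. x \<bullet> axis j 1 = p + c / b} \<in> null_sets lborel"
    using negligible_standard_hyperplane[of "axis j (1::real)" "p + c / b"]
    by (simp add: negligible_iff_null_sets null_sets_completion_iff cart_eq_inner_axis[symmetric])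
  ultimately show ?thesis by auto
qed (use c in simp)

lemma residual_product_level_set_lborel_null:
  fixes \<phi> \<gamma> W :: "real^'dz::finite \<Rightarrow> real" and j :: "'dx::finite" and l :: "'dy::finite"
  assumes [measurable]: "\<phi> \<in> borel_measurable borel" "\<gamma> \<in> borel_measurable borel" "W \<in> borel_measurable borel"
    and c: "c \<noteq> 0"
  shows "{t :: ('dx, 'dy, 'dz) obs. (fst t $ j - \<phi> (snd (snd t))) * (fst (snd t) $ l - \<gamma> (snd (snd t)))
            * W (snd (snd t)) = c} \<in> null_sets lborel" (is "?A \<in> _")
proof -
  have [measurable]: "(\<lambda>t::('dx, 'dy, 'dz) obs. fst t $ j) \<in> borel_measurable borel"
      "(\<lambda>t::('dx, 'dy, 'dz) obs. fst (snd t) $ l) \<in> borel_measurable borel"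
      "(\<lambda>t::('dx, 'dy, 'dz) obs. snd (snd t)) \<in> borel_measurable borel"
    by (intro borel_measurable_continuous_onI continuous_intros)+
  have "{t \<in> space borel. (fst t $ j - \<phi> (snd (snd t))) * (fst (snd t) $ l - \<gamma> (snd (snd t))) * W (snd (snd t))
      = (\<lambda>_. c) t} \<in> sets (borel :: ('dx, 'dy, 'dz) obs measure)"
    by (rule borel_measurable_eq) measurable
  then have A: "?A \<in> sets (lborel \<Otimes>\<^sub>M lborel)" by (subst lborel_prod) simp
  \<comment> \<open>every section in the X-coordinate is contained in a hyperplane\<close>
  have "emeasure (lborel \<Otimes>\<^sub>M lborel) ?A = (\<integral>\<^sup>+y. emeasure lborel ((\<lambda>x. (x, y)) -` ?A) \<partial>lborel)"
    by (rule lborel_pair.emeasure_pair_measure_alt2[OF A])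
  also have "\<dots> = (\<integral>\<^sup>+y. 0 \<partial>(lborel :: ((real^'dy) \<times> (real^'dz)) measure))"
  proof (rule nn_integral_cong)
    fix y :: "(real^'dy) \<times> (real^'dz)"
    have "(\<lambda>x. (x, y)) -` ?A = {x. (x $ j - \<phi> (snd y)) * ((fst y $ l - \<gamma> (snd y)) * W (snd y)) = c}"
      by (auto simp: mult.assoc)
    then show "emeasure lborel ((\<lambda>x. (x, y)) -` ?A) = 0" using coordinate_hyperplane_null[OF c] by simp
  qed
  finally show ?thesis using A by (auto simp: lborel_prod)
qed

lemma measure_Un_le_add:
  "A \<in> sets M \<Longrightarrow> B \<in> sets M \<Longrightarrow> measure M A \<le> x \<Longrightarrow> measure M B \<le> y \<Longrightarrow> measure M (A \<union> B) \<le> x + y"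
  using measure_Un_le[of A M B] by linarith

locale residual_model =
  fixes P :: "('dx::finite, 'dy::finite, 'dz::finite) obs measure"
    and j :: 'dx and l :: 'dy
    and f u :: "real^'dz \<Rightarrow> real" and g v :: "real^'dz \<Rightarrow> real"
    and W :: "real^'dz \<Rightarrow> real" and C :: real
  assumes prob_space_P: "prob_space P" and sets_P: "sets P = sets borel"
    and absolutely_continuous: "absolutely_continuous lborel P"
    and f: "regr_fun P (\<lambda>t. snd (snd t)) (\<lambda>t. fst t $ j) f"
    and g: "regr_fun P (\<lambda>t. snd (snd t)) (\<lambda>t. fst (snd t) $ l) g"
    and u: "nn_regr_fun P (\<lambda>t. snd (snd t)) (\<lambda>t. (fst t $ j - f (snd (snd t)))^2) u"
    and v: "nn_regr_fun P (\<lambda>t. snd (snd t)) (\<lambda>t. (fst (snd t) $ l - g (snd (snd t)))^2) v"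
    and W_measurable[measurable]: "W \<in> borel_measurable borel" and W_bound: "\<And>z. \<bar>W z\<bar> \<le> C"
    and fourth_moment: "(\<integral>\<^sup>+t. ennreal ((fst t $ j - f (snd (snd t)))^2 * (fst (snd t) $ l - g (snd (snd t)))^2) \<partial>P) < \<infinity>"
begin

abbreviation Z :: "('dx, 'dy, 'dz) obs \<Rightarrow> real^'dz" where "Z t \<equiv> snd (snd t)"
abbreviation \<epsilon> :: "('dx, 'dy, 'dz) obs \<Rightarrow> real" where "\<epsilon> t \<equiv> fst t $ j - f (Z t)"
abbreviation \<xi> :: "('dx, 'dy, 'dz) obs \<Rightarrow> real" where "\<xi> t \<equiv> fst (snd t) $ l - g (Z t)"
abbreviation sample :: "nat \<Rightarrow> (nat \<Rightarrow> ('dx, 'dy, 'dz) obs) measure" where "sample n \<equiv> PiM {..<n} (\<lambda>_. P)"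

definition \<mu> :: real where "\<mu> = (\<integral>t. \<epsilon> t * \<xi> t * W (Z t) \<partial>P)"
definition \<sigma>2 :: real where "\<sigma>2 = (\<integral>t. (\<epsilon> t * \<xi> t * W (Z t) - \<mu>)^2 \<partial>P)"
definition \<tau>2 :: real where "\<tau>2 = (\<integral>t. (\<epsilon> t)^2 * (\<xi> t)^2 \<partial>P)"

sublocale P: prob_space P by (fact prob_space_P)

lemma measurable_P_iff_borel: "measurable P N = measurable borel N"
  by (rule measurable_cong_sets[OF sets_P refl])

lemma component_measurable[measurable]:
  "(\<lambda>t. fst t $ j') \<in> borel_measurable P" "(\<lambda>t. fst (snd t) $ l') \<in> borel_measurable P"
  "(\<lambda>t. snd (snd t)) \<in> measurable P borel"
  unfolding measurable_P_iff_borel by (intro borel_measurable_continuous_onI continuous_intros)+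

lemma covariate_section_measurable[measurable]: "(\<lambda>z. (0, 0, z)) \<in> measurable borel P"
  unfolding measurable_cong_sets[OF refl sets_P] by (intro borel_measurable_continuous_onI continuous_intros)

lemma regression_measurable[measurable]:
  "f \<in> borel_measurable borel" "g \<in> borel_measurable borel"
  "u \<in> borel_measurable borel" "v \<in> borel_measurable borel"
  using f g u v by (auto simp: regr_fun_def nn_regr_fun_def)

lemma residual_measurable[measurable]:
  "(\<lambda>t. \<epsilon> t) \<in> borel_measurable P" "(\<lambda>t. \<xi> t) \<in> borel_measurable P"
  by measurable measurable

lemma u_nonneg: "0 \<le> u z" and v_nonneg: "0 \<le> v z"
  using u v by (auto simp: nn_regr_fun_def)

lemma iid_sample: "iid_sample P (\<lambda>t. snd (snd t)) (\<lambda>z. (0, 0, z)) {..<n::nat}"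
  by (intro iid_sample.intro prob_space_P component_measurable covariate_section_measurable) simp_all

lemma integrable_fourth_moment: "integrable P (\<lambda>t. (\<epsilon> t)^2 * (\<xi> t)^2)"
  using fourth_moment by (simp add: integrable_iff_bounded)

lemma integrable_centred_square: "integrable P (\<lambda>t. (\<epsilon> t * \<xi> t * W (Z t) - \<mu>)^2)"
proof (rule Bochner_Integration.integrable_bound[of _ "\<lambda>t. 2 * C^2 * ((\<epsilon> t)^2 * (\<xi> t)^2) + 2 * \<mu>^2"])
  show "integrable P (\<lambda>t. 2 * C^2 * ((\<epsilon> t)^2 * (\<xi> t)^2) + 2 * \<mu>^2)"
    using integrable_fourth_moment by simp
  have bound: "(p * w - \<mu>)^2 \<le> 2 * C^2 * p^2 + 2 * \<mu>^2" if "\<bar>w\<bar> \<le> C" for p w :: real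
  proof -
    have "(p * w - \<mu>)^2 \<le> 2 * (p * w)^2 + 2 * \<mu>^2"
      using sum_squares_bound[of "p * w" "- \<mu>"] by (simp add: power2_diff)
    moreover have "(p * w)^2 \<le> C^2 * p^2"
      using mult_left_mono[OF power_mono[OF that abs_ge_zero, of 2], of "p^2"]
      by (simp add: power_mult_distrib mult.commute)
    ultimately show ?thesis by linarith
  qed
  show "AE t in P. norm ((\<epsilon> t * \<xi> t * W (Z t) - \<mu>)^2)
      \<le> norm (2 * C^2 * ((\<epsilon> t)^2 * (\<xi> t)^2) + 2 * \<mu>^2)"
  proof (rule AE_I2)
    fix t
    have "(\<epsilon> t * \<xi> t * W (Z t) - \<mu>)^2 \<le> 2 * C^2 * (\<epsilon> t * \<xi> t)^2 + 2 * \<mu>^2"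
      by (rule bound[OF W_bound])
    then show "norm ((\<epsilon> t * \<xi> t * W (Z t) - \<mu>)^2) \<le> norm (2 * C^2 * ((\<epsilon> t)^2 * (\<xi> t)^2) + 2 * \<mu>^2)"
      by (simp add: power_mult_distrib)
  qed
qed measurable

lemma mean_centred: "(\<integral>t. \<epsilon> t * \<xi> t * W (Z t) - \<mu> \<partial>P) = 0"
proof -
  have centred: "integrable P (\<lambda>t. \<epsilon> t * \<xi> t * W (Z t) - \<mu>)"
    using integrable_centred_square by (rule P.square_integrable_imp_integrable[rotated]) measurable
  then have "integrable P (\<lambda>t. (\<epsilon> t * \<xi> t * W (Z t) - \<mu>) + \<mu>)"
    by (rule Bochner_Integration.integrable_add) simp
  then have "integrable P (\<lambda>t. \<epsilon> t * \<xi> t * W (Z t))" by simp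
  then show ?thesis by (simp add: \<mu>_def P.prob_space)
qed


definition bad_sample :: "(real^'dz \<Rightarrow> real) \<Rightarrow> (real^'dz \<Rightarrow> real) \<Rightarrow> nat \<Rightarrow> real \<Rightarrow> (nat \<Rightarrow> ('dx, 'dy, 'dz) obs) \<Rightarrow> bool" where
  "bad_sample \<phi> \<gamma> n L d \<longleftrightarrow>
     n * \<bar>\<mu>\<bar> / 8 \<le> \<bar>\<Sum>k<n. \<epsilon> (d k) * \<xi> (d k) * W (Z (d k)) - \<mu>\<bar>
   \<or> (\<Sum>k<n. (f (Z (d k)) - \<phi> (Z (d k)))^2 * v (Z (d k))) \<le> n \<and>
       n * \<bar>\<mu>\<bar> / 8 \<le> \<bar>\<Sum>k<n. (f (Z (d k)) - \<phi> (Z (d k))) * W (Z (d k)) * \<xi> (d k)\<bar>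
   \<or> (\<Sum>k<n. (g (Z (d k)) - \<gamma> (Z (d k)))^2 * u (Z (d k))) \<le> n \<and>
       n * \<bar>\<mu>\<bar> / 8 \<le> \<bar>\<Sum>k<n. (g (Z (d k)) - \<gamma> (Z (d k))) * W (Z (d k)) * \<epsilon> (d k)\<bar>
   \<or> n * L \<le> (\<Sum>k<n. (\<epsilon> (d k))^2 * (\<xi> (d k))^2)
   \<or> (\<Sum>k<n. (f (Z (d k)) - \<phi> (Z (d k)))^2 * v (Z (d k))) \<le> n \<and>
       n * L \<le> (\<Sum>k<n. (f (Z (d k)) - \<phi> (Z (d k)))^2 * (\<xi> (d k))^2)
   \<or> (\<Sum>k<n. (g (Z (d k)) - \<gamma> (Z (d k)))^2 * u (Z (d k))) \<le> n \<and>
       n * L \<le> (\<Sum>k<n. (g (Z (d k)) - \<gamma> (Z (d k)))^2 * (\<epsilon> (d k))^2)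
   \<or> Rvec \<phi> \<gamma> W j l d 0 = Rvec \<phi> \<gamma> W j l d 1 \<and> Rvec \<phi> \<gamma> W j l d 1 \<noteq> 0"

lemma abs_Tstat_ge_of_good_sample:
  fixes \<phi> \<gamma> :: "real^'dz \<Rightarrow> real" and d :: "nat \<Rightarrow> ('dx, 'dy, 'dz) obs"
  assumes good: "\<not> bad_sample \<phi> \<gamma> n L d"
    and Bf: "Berr n f \<phi> v (\<lambda>i. Z (d i)) \<le> 1" and Bg: "Berr n g \<gamma> u (\<lambda>i. Z (d i)) \<le> 1"
    and rates: "n * (Aerr n f \<phi> (\<lambda>i. Z (d i)) * Aerr n g \<gamma> (\<lambda>i. Z (d i))) \<le> 1"
    and n: "2 \<le> n" and L: "0 < L" and c: "0 < c" and \<mu>: "\<mu> \<noteq> 0"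
    and n_large: "8 * C \<le> sqrt n * \<bar>\<mu>\<bar>" "16 * c^2 * C^2 * (3 * L + 1) \<le> n * \<mu>^2"
  shows "c \<le> \<bar>Tstat n (Rvec \<phi> \<gamma> W j l d)\<bar>"
proof (rule abs_Tstat_ge[OF n])
  define \<delta> where "\<delta> k = f (Z (d k)) - \<phi> (Z (d k))" for k
  define \<rho> where "\<rho> k = g (Z (d k)) - \<gamma> (Z (d k))" for k
  have n_pos: "0 < real n" using n by simp
  have R: "Rvec \<phi> \<gamma> W j l d k = (\<epsilon> (d k) + \<delta> k) * (\<xi> (d k) + \<rho> k) * W (Z (d k))" for k
    by (simp add: Rvec_def \<delta>_def \<rho>_def)
  have "(\<Sum>k<n. (\<delta> k)^2) * (\<Sum>k<n. (\<rho> k)^2) = n * (n * (Aerr n f \<phi> (\<lambda>i. Z (d i)) * Aerr n g \<gamma> (\<lambda>i. Z (d i))))"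
    using n_pos by (simp add: Aerr_def \<delta>_def \<rho>_def field_simps power2_eq_square)
  also have "\<dots> \<le> n" using rates n_pos by (simp add: mult_left_le)
  finally have rates': "(\<Sum>k<n. (\<delta> k)^2) * (\<Sum>k<n. (\<rho> k)^2) \<le> n" .
  have "(\<Sum>k<n. (\<delta> k)^2 * v (Z (d k))) \<le> n" "(\<Sum>k<n. (\<rho> k)^2 * u (Z (d k))) \<le> n"
    using Bf Bg n_pos by (simp_all add: Berr_def \<delta>_def \<rho>_def divide_le_eq)
  then have main: "\<bar>\<Sum>k<n. \<epsilon> (d k) * \<xi> (d k) * W (Z (d k)) - \<mu>\<bar> < n * \<bar>\<mu>\<bar> / 8"
    and cross_f: "\<bar>\<Sum>k<n. \<delta> k * W (Z (d k)) * \<xi> (d k)\<bar> < n * \<bar>\<mu>\<bar> / 8"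
    and cross_g: "\<bar>\<Sum>k<n. \<rho> k * W (Z (d k)) * \<epsilon> (d k)\<bar> < n * \<bar>\<mu>\<bar> / 8"
    and fourth: "(\<Sum>k<n. (\<epsilon> (d k))^2 * (\<xi> (d k))^2) < n * L"
    and square_f: "(\<Sum>k<n. (\<delta> k)^2 * (\<xi> (d k))^2) < n * L"
    and square_g: "(\<Sum>k<n. (\<rho> k)^2 * (\<epsilon> (d k))^2) < n * L"
    and no_tie: "\<not> (Rvec \<phi> \<gamma> W j l d 0 = Rvec \<phi> \<gamma> W j l d 1 \<and> Rvec \<phi> \<gamma> W j l d 1 \<noteq> 0)"
    using good by (auto simp: bad_sample_def \<delta>_def \<rho>_def not_le)
  show "\<not> (Rvec \<phi> \<gamma> W j l d 0 = Rvec \<phi> \<gamma> W j l d 1 \<and> Rvec \<phi> \<gamma> W j l d 1 \<noteq> 0)" by (fact no_tie)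
  show "0 < \<bar>\<mu>\<bar> / 2" using \<mu> by simp
  show "\<bar>\<mu>\<bar> / 2 \<le> \<bar>Rbar n (Rvec \<phi> \<gamma> W j l d)\<bar>"
    by (rule abs_Rbar_ge_of_decomposition[OF R W_bound _ main cross_f cross_g rates' n_large(1)]) (use n in simp)
  show "(\<Sum>k<n. (Rvec \<phi> \<gamma> W j l d k)^2) \<le> n * (4 * C^2 * (3 * L + 1))"
    by (rule sum_square_le_of_decomposition[OF R W_bound rates' fourth square_g square_f])
  show "0 < c" by (fact c)
  show "c^2 * (4 * C^2 * (3 * L + 1)) \<le> n * (\<bar>\<mu>\<bar> / 2)^2"
    using n_large(2) by (simp add: power_divide field_simps)
qed

lemma residual_product_level_sets_null:
  fixes \<phi> \<gamma> :: "real^'dz \<Rightarrow> real"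
  assumes [measurable]: "\<phi> \<in> borel_measurable borel" "\<gamma> \<in> borel_measurable borel" and c: "c \<noteq> 0"
  shows "{t\<in>space P. (fst t $ j - \<phi> (Z t)) * (fst (snd t) $ l - \<gamma> (Z t)) * W (Z t) = c} \<in> null_sets P"
proof -
  have "space P = UNIV" using sets_eq_imp_space_eq[OF sets_P] by simp
  then show ?thesis
    using residual_product_level_set_lborel_null[OF _ _ W_measurable c, of \<phi> \<gamma> j l] absolutely_continuous
    by (auto simp: absolutely_continuous_def)
qed

lemma measure_bad_sample_le:
  fixes \<phi> \<gamma> :: "real^'dz \<Rightarrow> real"
  assumes [measurable]: "\<phi> \<in> borel_measurable borel" "\<gamma> \<in> borel_measurable borel"
    and n: "2 \<le> n" and L: "0 < L" and \<mu>: "\<mu> \<noteq> 0"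
  shows "measure (sample n) {d\<in>space (sample n). bad_sample \<phi> \<gamma> n L d}
    \<le> (64 * \<sigma>2 + 128 * C^2) / (n * \<mu>^2) + (\<tau>2 + 2) / L"
proof -
  interpret S: iid_sample P "\<lambda>t. snd (snd t)" "\<lambda>z. (0, 0, z)" "{..<n}" by (rule iid_sample)
  define a where "a = n * \<bar>\<mu>\<bar> / 8"
  have n_pos: "0 < real n" using n by simp
  have a: "0 < a" using n_pos \<mu> by (simp add: a_def)
  have nL: "0 < n * L" using n_pos L by simp
  have [measurable]: "(\<lambda>d. d 0) \<in> measurable (sample n) P" "(\<lambda>d. d 1) \<in> measurable (sample n) P"
    using n by auto
  define S1 where "S1 = {d\<in>space (sample n). a \<le> \<bar>\<Sum>k<n. \<epsilon> (d k) * \<xi> (d k) * W (Z (d k)) - \<mu>\<bar>}"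
  define S2 where "S2 = {d\<in>space (sample n). (\<Sum>k<n. (f (Z (d k)) - \<phi> (Z (d k)))^2 * v (Z (d k))) \<le> n \<and>
       a \<le> \<bar>\<Sum>k<n. (f (Z (d k)) - \<phi> (Z (d k))) * W (Z (d k)) * \<xi> (d k)\<bar>}"
  define S3 where "S3 = {d\<in>space (sample n). (\<Sum>k<n. (g (Z (d k)) - \<gamma> (Z (d k)))^2 * u (Z (d k))) \<le> n \<and>
       a \<le> \<bar>\<Sum>k<n. (g (Z (d k)) - \<gamma> (Z (d k))) * W (Z (d k)) * \<epsilon> (d k)\<bar>}"
  define S4 where "S4 = {d\<in>space (sample n). n * L \<le> (\<Sum>k<n. (\<epsilon> (d k))^2 * (\<xi> (d k))^2)}"
  define S5 where "S5 = {d\<in>space (sample n). (\<Sum>k<n. (f (Z (d k)) - \<phi> (Z (d k)))^2 * v (Z (d k))) \<le> n \<and>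
       n * L \<le> (\<Sum>k<n. (f (Z (d k)) - \<phi> (Z (d k)))^2 * (\<xi> (d k))^2)}"
  define S6 where "S6 = {d\<in>space (sample n). (\<Sum>k<n. (g (Z (d k)) - \<gamma> (Z (d k)))^2 * u (Z (d k))) \<le> n \<and>
       n * L \<le> (\<Sum>k<n. (g (Z (d k)) - \<gamma> (Z (d k)))^2 * (\<epsilon> (d k))^2)}"
  define S7 where "S7 = {d\<in>space (sample n). Rvec \<phi> \<gamma> W j l d 0 = Rvec \<phi> \<gamma> W j l d 1 \<and> Rvec \<phi> \<gamma> W j l d 1 \<noteq> 0}"
  have sets: "S1 \<in> sets (sample n)" "S2 \<in> sets (sample n)" "S3 \<in> sets (sample n)" "S4 \<in> sets (sample n)"
    "S5 \<in> sets (sample n)" "S6 \<in> sets (sample n)"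
    unfolding S1_def S2_def S3_def S4_def S5_def S6_def by measurable
  have \<delta>_meas: "(\<lambda>z. f z - \<phi> z) \<in> borel_measurable borel" "(\<lambda>z. g z - \<gamma> z) \<in> borel_measurable borel"
    by measurable
  have b1: "measure (sample n) S1 \<le> card {..<n} * \<sigma>2 / a^2"
    unfolding S1_def \<sigma>2_def
    by (rule S.measure_abs_sum_ge[OF _ integrable_centred_square mean_centred a]) measurable
  have b2: "measure (sample n) S2 \<le> C^2 * n / a^2"
    unfolding S2_def
    by (rule S.measure_weighted_residual_sum_ge[OF g v \<delta>_meas(1) W_measurable W_bound a]) simp
  have b3: "measure (sample n) S3 \<le> C^2 * n / a^2"
    unfolding S3_def
    by (rule S.measure_weighted_residual_sum_ge[OF f u \<delta>_meas(2) W_measurable W_bound a]) simp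
  have b4: "measure (sample n) S4 \<le> card {..<n} * \<tau>2 / (n * L)"
    unfolding S4_def \<tau>2_def by (rule S.measure_sum_ge[OF integrable_fourth_moment _ nL]) simp
  have b5: "measure (sample n) S5 \<le> n / (n * L)"
    unfolding S5_def
    by (rule S.measure_truncated_square_sum_ge[OF v residual_measurable(2) \<delta>_meas(1) nL]) simp
  have b6: "measure (sample n) S6 \<le> n / (n * L)"
    unfolding S6_def
    by (rule S.measure_truncated_square_sum_ge[OF u residual_measurable(1) \<delta>_meas(2) nL]) simp
  have "measure (sample n) {d\<in>space (sample n). bad_sample \<phi> \<gamma> n L d}
      = measure (sample n) (S1 \<union> S2 \<union> S3 \<union> S4 \<union> S5 \<union> S6)"
  proof -
    have "S7 \<in> null_sets (sample n)"
      unfolding S7_def Rvec_def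
    proof (rule S.ties_null[where R = "\<lambda>t. (fst t $ j - \<phi> (Z t)) * (fst (snd t) $ l - \<gamma> (Z t)) * W (Z t)"])
      show "(\<lambda>t. (fst t $ j - \<phi> (Z t)) * (fst (snd t) $ l - \<gamma> (Z t)) * W (Z t)) \<in> borel_measurable P"
        by measurable
      show "0 \<in> {..<n}" "1 \<in> {..<n}" using n by auto
      show "{t\<in>space P. (fst t $ j - \<phi> (Z t)) * (fst (snd t) $ l - \<gamma> (Z t)) * W (Z t) = c} \<in> null_sets P"
        if "c \<noteq> 0" for c
        using residual_product_level_sets_null[OF _ _ that] by simp
    qed simp
    moreover have "{d\<in>space (sample n). bad_sample \<phi> \<gamma> n L d} = S1 \<union> S2 \<union> S3 \<union> S4 \<union> S5 \<union> S6 \<union> S7"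
      unfolding bad_sample_def S1_def S2_def S3_def S4_def S5_def S6_def S7_def a_def
      by (simp add: set_eq_iff conj_disj_distribL)
    ultimately show ?thesis using sets by (simp add: measure_Un_null_set)
  qed
  also have "\<dots> \<le> card {..<n} * \<sigma>2 / a^2 + C^2 * n / a^2 + C^2 * n / a^2
      + card {..<n} * \<tau>2 / (n * L) + n / (n * L) + n / (n * L)"
    by (intro measure_Un_le_add sets.Un sets b1 b2 b3 b4 b5 b6)
  also have "\<dots> = (64 * \<sigma>2 + 128 * C^2) / (n * \<mu>^2) + (\<tau>2 + 2) / L"
    using n_pos \<mu> L by (simp add: a_def field_simps power2_eq_square abs_mult_self_eq)
  finally show ?thesis .
qed

lemma measure_Tstat_small_le:
  fixes \<phi> \<gamma> :: "real^'dz \<Rightarrow> real"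
  assumes \<phi>[measurable]: "\<phi> \<in> borel_measurable borel" and \<gamma>[measurable]: "\<gamma> \<in> borel_measurable borel"
    and n: "2 \<le> n" and L: "0 < L" and c: "0 < c" and \<mu>: "\<mu> \<noteq> 0"
    and n_large: "8 * C \<le> sqrt n * \<bar>\<mu>\<bar>" "16 * c^2 * C^2 * (3 * L + 1) \<le> n * \<mu>^2"
  shows "measure (sample n) {d\<in>space (sample n). \<bar>Tstat n (Rvec \<phi> \<gamma> W j l d)\<bar> < c}
    \<le> measure (sample n) {d\<in>space (sample n). 1 < Berr n f \<phi> v (\<lambda>i. Z (d i))}
      + measure (sample n) {d\<in>space (sample n). 1 < Berr n g \<gamma> u (\<lambda>i. Z (d i))}
      + measure (sample n) {d\<in>space (sample n). 1 < n * (Aerr n f \<phi> (\<lambda>i. Z (d i)) * Aerr n g \<gamma> (\<lambda>i. Z (d i)))}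
      + ((64 * \<sigma>2 + 128 * C^2) / (n * \<mu>^2) + (\<tau>2 + 2) / L)"
    (is "measure _ ?T \<le> measure _ ?B1 + measure _ ?B2 + measure _ ?B3 + _")
proof -
  let ?bad = "{d\<in>space (sample n). bad_sample \<phi> \<gamma> n L d}"
  interpret S: iid_sample P "\<lambda>t. snd (snd t)" "\<lambda>z. (0, 0, z)" "{..<n}" by (rule iid_sample)
  have [measurable]: "(\<lambda>d. d 0) \<in> measurable (sample n) P" "(\<lambda>d. d 1) \<in> measurable (sample n) P"
    using n by auto
  have [measurable]: "(\<lambda>d. Rvec \<phi> \<gamma> W j l d 0) \<in> borel_measurable (sample n)"
      "(\<lambda>d. Rvec \<phi> \<gamma> W j l d 1) \<in> borel_measurable (sample n)"
    unfolding Rvec_def by measurable measurable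
  have [measurable]: "Measurable.pred (sample n) (\<lambda>d. Rvec \<phi> \<gamma> W j l d 0 = Rvec \<phi> \<gamma> W j l d 1)"
    unfolding pred_def by (rule borel_measurable_eq) (measurable, measurable)
  have sets: "?B1 \<in> sets (sample n)" "?B2 \<in> sets (sample n)" "?B3 \<in> sets (sample n)"
      "?bad \<in> sets (sample n)"
    unfolding Berr_def Aerr_def bad_sample_def by measurable
  have "?T \<subseteq> ?B1 \<union> ?B2 \<union> ?B3 \<union> ?bad"
  proof
    fix d assume "d \<in> ?T"
    then have d: "d \<in> space (sample n)" and T: "\<bar>Tstat n (Rvec \<phi> \<gamma> W j l d)\<bar> < c" by auto
    show "d \<in> ?B1 \<union> ?B2 \<union> ?B3 \<union> ?bad"
    proof (rule ccontr)
      assume "d \<notin> ?B1 \<union> ?B2 \<union> ?B3 \<union> ?bad"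
      then have "c \<le> \<bar>Tstat n (Rvec \<phi> \<gamma> W j l d)\<bar>"
        using d by (intro abs_Tstat_ge_of_good_sample[OF _ _ _ _ n L c \<mu> n_large]) (auto simp: not_less)
      then show False using T by simp
    qed
  qed
  then have "measure (sample n) ?T \<le> measure (sample n) (?B1 \<union> ?B2 \<union> ?B3 \<union> ?bad)"
    using sets by (intro S.PI.finite_measure_mono) auto
  also have "\<dots> \<le> measure (sample n) ?B1 + measure (sample n) ?B2 + measure (sample n) ?B3
      + ((64 * \<sigma>2 + 128 * C^2) / (n * \<mu>^2) + (\<tau>2 + 2) / L)"
    by (intro measure_Un_le_add sets.Un sets order_refl measure_bad_sample_le[OF \<phi> \<gamma> n L \<mu>])
  finally show ?thesis .
qed

end

section \<open>Sample splitting\<close>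

lemma emeasure_indep_pair:
  fixes M :: "'o measure" and A :: "'a measure" and N :: "'d measure"
  assumes M: "prob_space M" and N: "prob_space N"
    and [measurable]: "X \<in> measurable M A" "Y \<in> measurable M N"
    and Y_distr: "distr M N Y = N"
    and indep: "\<And>S T. S \<in> sets A \<Longrightarrow> T \<in> sets N \<Longrightarrow>
       measure M {\<omega>\<in>space M. X \<omega> \<in> S \<and> Y \<omega> \<in> T} = measure M {\<omega>\<in>space M. X \<omega> \<in> S} * measure M {\<omega>\<in>space M. Y \<omega> \<in> T}"
    and S: "S \<in> sets (A \<Otimes>\<^sub>M N)"
  shows "emeasure M {\<omega>\<in>space M. (X \<omega>, Y \<omega>) \<in> S} = (\<integral>\<^sup>+\<omega>. emeasure N (Pair (X \<omega>) -` S) \<partial>M)"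
proof -
  interpret M: prob_space M by fact
  interpret N: prob_space N by fact
  define Q where "Q = distr M A X"
  interpret Q: prob_space Q unfolding Q_def by (rule M.prob_space_distr) simp
  interpret QN: pair_sigma_finite Q N ..
  have sets_Q: "sets Q = sets A" by (simp add: Q_def)
  have joint: "Q \<Otimes>\<^sub>M N = distr M (A \<Otimes>\<^sub>M N) (\<lambda>\<omega>. (X \<omega>, Y \<omega>))"
  proof (rule pair_measure_eqI)
    show "sets (Q \<Otimes>\<^sub>M N) = sets (distr M (A \<Otimes>\<^sub>M N) (\<lambda>\<omega>. (X \<omega>, Y \<omega>)))"
      using sets_Q by (simp cong: sets_pair_measure_cong)
    fix S T assume "S \<in> sets Q" "T \<in> sets N"
    then have [measurable]: "S \<in> sets A" "T \<in> sets N" using sets_Q by auto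
    have "emeasure Q S = measure M {\<omega>\<in>space M. X \<omega> \<in> S}"
      by (simp add: Q_def emeasure_distr M.emeasure_eq_measure Int_def conj_commute)
    moreover have "emeasure N T = measure M {\<omega>\<in>space M. Y \<omega> \<in> T}"
      by (subst Y_distr[symmetric]) (simp add: emeasure_distr M.emeasure_eq_measure Int_def conj_commute)
    moreover have "(\<lambda>\<omega>. (X \<omega>, Y \<omega>)) -` (S \<times> T) \<inter> space M = {\<omega>\<in>space M. X \<omega> \<in> S \<and> Y \<omega> \<in> T}" by auto
    ultimately show "emeasure Q S * emeasure N T = emeasure (distr M (A \<Otimes>\<^sub>M N) (\<lambda>\<omega>. (X \<omega>, Y \<omega>))) (S \<times> T)"
      by (simp add: emeasure_distr M.emeasure_eq_measure indep ennreal_mult)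
  qed (unfold_locales)
  have S': "S \<in> sets (Q \<Otimes>\<^sub>M N)" using S sets_Q by (simp cong: sets_pair_measure_cong)
  have "emeasure M {\<omega>\<in>space M. (X \<omega>, Y \<omega>) \<in> S} = emeasure (distr M (A \<Otimes>\<^sub>M N) (\<lambda>\<omega>. (X \<omega>, Y \<omega>))) S"
    using S by (simp add: emeasure_distr Int_def conj_commute)
  also have "\<dots> = (\<integral>\<^sup>+x. emeasure N (Pair x -` S) \<partial>Q)"
    unfolding joint[symmetric] by (rule N.emeasure_pair_measure_alt[OF S'])
  also have "\<dots> = (\<integral>\<^sup>+\<omega>. emeasure N (Pair (X \<omega>) -` S) \<partial>M)"
    unfolding Q_def by (rule nn_integral_distr) (use N.measurable_emeasure_Pair[OF S] in auto)
  finally show ?thesis .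
qed

lemma measurable_case_prod_compose:
  assumes "(\<lambda>(a, z). H a z) \<in> borel_measurable (A \<Otimes>\<^sub>M B)" "x \<in> measurable X A" "y \<in> measurable X B"
  shows "(\<lambda>t. H (x t) (y t)) \<in> borel_measurable X"
  using measurable_compose[OF measurable_Pair[OF assms(2,3)] assms(1)] by simp

lemma Tstat_cong:
  assumes "\<And>i. i < n \<Longrightarrow> r i = r' i"
  shows "Tstat n r = Tstat n r'"
proof -
  have "sum r {..<n} = sum r' {..<n}" "(\<Sum>i<n. (r i)^2) = (\<Sum>i<n. (r' i)^2)"
    using assms by (auto intro!: sum.cong)
  then show ?thesis unfolding Tstat_def Rbar_def by simp
qed

lemma Berr_cong: "(\<And>i. i < n \<Longrightarrow> zs i = zs' i) \<Longrightarrow> Berr n f fh v zs = Berr n f fh v zs'"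
  unfolding Berr_def by (auto intro!: sum.cong arg_cong2[where f = "(/)"])

lemma Aerr_cong: "(\<And>i. i < n \<Longrightarrow> zs i = zs' i) \<Longrightarrow> Aerr n f fh zs = Aerr n f fh zs'"
  unfolding Aerr_def by (auto intro!: sum.cong arg_cong2[where f = "(/)"])

lemma Berr_nonneg: "(\<And>z. 0 \<le> v z) \<Longrightarrow> 0 \<le> Berr n f fh v zs"
  unfolding Berr_def by (intro divide_nonneg_nonneg sum_nonneg) auto

lemma Aerr_nonneg: "0 \<le> Aerr n f fh zs"
  unfolding Aerr_def by (intro divide_nonneg_nonneg sum_nonneg) auto

locale sample_splitting = residual_model P j l f u g v W C
  for P :: "('dx::finite, 'dy::finite, 'dz::finite) obs measure" and j l f u g v W C +
  fixes M :: "'o measure" and D :: "nat \<Rightarrow> nat \<Rightarrow> 'o \<Rightarrow> ('dx, 'dy, 'dz) obs"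
    and Aux :: "nat \<Rightarrow> 'a measure" and aux :: "nat \<Rightarrow> 'o \<Rightarrow> 'a"
    and F G :: "nat \<Rightarrow> 'a \<Rightarrow> real^'dz \<Rightarrow> real"
  assumes prob_space_M: "prob_space M"
    and data_rv: "\<And>n i. i < n \<Longrightarrow> D n i \<in> borel_measurable M"
    and data_dist: "\<And>n i. i < n \<Longrightarrow> distr M borel (D n i) = P"
    and data_indep: "\<And>n. prob_space.indep_vars M (\<lambda>_. borel) (D n) {..<n}"
    and aux_rv: "\<And>n. aux n \<in> measurable M (Aux n)"
    and aux_indep: "\<And>n A B. A \<in> sets (Aux n) \<Longrightarrow> B \<in> sets (PiM {..<n} (\<lambda>_. borel)) \<Longrightarrow>
          measure M {\<omega>\<in>space M. aux n \<omega> \<in> A \<and> (\<lambda>i\<in>{..<n}. D n i \<omega>) \<in> B}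
        = measure M {\<omega>\<in>space M. aux n \<omega> \<in> A} * measure M {\<omega>\<in>space M. (\<lambda>i\<in>{..<n}. D n i \<omega>) \<in> B}"
    and F_measurable: "\<And>n. (\<lambda>(a, z). F n a z) \<in> borel_measurable (Aux n \<Otimes>\<^sub>M borel)"
    and G_measurable: "\<And>n. (\<lambda>(a, z). G n a z) \<in> borel_measurable (Aux n \<Otimes>\<^sub>M borel)"
    and A_rate: "oP M (\<lambda>n \<omega>. Aerr n f (F n (aux n \<omega>)) (\<lambda>i. snd (snd (D n i \<omega>)))
        * Aerr n g (G n (aux n \<omega>)) (\<lambda>i. snd (snd (D n i \<omega>)))) (\<lambda>n. 1 / real n)"
    and Bf: "oP M (\<lambda>n \<omega>. Berr n f (F n (aux n \<omega>)) v (\<lambda>i. snd (snd (D n i \<omega>)))) (\<lambda>n. 1)"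
    and Bg: "oP M (\<lambda>n \<omega>. Berr n g (G n (aux n \<omega>)) u (\<lambda>i. snd (snd (D n i \<omega>)))) (\<lambda>n. 1)"
begin

sublocale M: prob_space M by (fact prob_space_M)

text \<open>The data vector is restricted to {..<n} so that it lies in the space of the product measure.\<close>

abbreviation data :: "nat \<Rightarrow> 'o \<Rightarrow> nat \<Rightarrow> ('dx, 'dy, 'dz) obs" where
  "data n \<omega> \<equiv> \<lambda>i\<in>{..<n}. D n i \<omega>"

lemma data_component_measurable: "i < n \<Longrightarrow> D n i \<in> measurable M P"
  using data_rv measurable_cong_sets[OF refl sets_P] by blast

lemma data_measurable[measurable]: "data n \<in> measurable M (sample n)"
  by (rule measurable_restrict) (simp add: data_component_measurable)

lemma distr_data: "0 < n \<Longrightarrow> distr M (sample n) (data n) = sample n"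
proof -
  assume n: "0 < n"
  have sets_eq: "sets (sample n) = sets (PiM {..<n} (\<lambda>_. borel))"
    by (rule sets_PiM_cong) (simp_all add: sets_P)
  have "distr M (PiM {..<n} (\<lambda>_. borel)) (data n) = PiM {..<n} (\<lambda>i. distr M borel (D n i))"
    using data_indep[of n] n
    by (subst M.indep_vars_iff_distr_eq_PiM'[symmetric]) (auto intro: data_rv simp: lessThan_empty_iff)
  also have "\<dots> = sample n" by (rule PiM_cong) (auto intro: data_dist)
  finally have "distr M (PiM {..<n} (\<lambda>_. borel)) (data n) = sample n" .
  moreover have "distr M (sample n) (data n) = distr M (PiM {..<n} (\<lambda>_. borel)) (data n)"
    by (rule distr_cong) (simp_all add: sets_eq)
  ultimately show ?thesis by simp
qed

lemma emeasure_split: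
  assumes n: "0 < n" and S: "S \<in> sets (Aux n \<Otimes>\<^sub>M sample n)"
  shows "emeasure M {\<omega>\<in>space M. (aux n \<omega>, data n \<omega>) \<in> S} = (\<integral>\<^sup>+\<omega>. emeasure (sample n) (Pair (aux n \<omega>) -` S) \<partial>M)"
proof (rule emeasure_indep_pair[OF prob_space_M _ aux_rv data_measurable distr_data[OF n] _ S])
  show "prob_space (sample n)" by (rule prob_space_PiM) (simp add: prob_space_P)
  have "sets (sample n) = sets (PiM {..<n} (\<lambda>_. borel))"
    by (rule sets_PiM_cong) (simp_all add: sets_P)
  then show "measure M {\<omega>\<in>space M. aux n \<omega> \<in> A \<and> data n \<omega> \<in> B}
      = measure M {\<omega>\<in>space M. aux n \<omega> \<in> A} * measure M {\<omega>\<in>space M. data n \<omega> \<in> B}"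
    if "A \<in> sets (Aux n)" "B \<in> sets (sample n)" for A B
    using aux_indep[of A n B] that by simp
qed

lemma measure_split_le:
  assumes n: "0 < n" and S: "S0 \<in> sets (Aux n \<Otimes>\<^sub>M sample n)" "S1 \<in> sets (Aux n \<Otimes>\<^sub>M sample n)"
      "S2 \<in> sets (Aux n \<Otimes>\<^sub>M sample n)" "S3 \<in> sets (Aux n \<Otimes>\<^sub>M sample n)"
    and \<kappa>: "0 \<le> \<kappa>"
    and section_le: "\<And>a. a \<in> space (Aux n) \<Longrightarrow> measure (sample n) (Pair a -` S0)
      \<le> measure (sample n) (Pair a -` S1) + measure (sample n) (Pair a -` S2) + measure (sample n) (Pair a -` S3) + \<kappa>"
  shows "measure M {\<omega>\<in>space M. (aux n \<omega>, data n \<omega>) \<in> S0}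
    \<le> measure M {\<omega>\<in>space M. (aux n \<omega>, data n \<omega>) \<in> S1} + measure M {\<omega>\<in>space M. (aux n \<omega>, data n \<omega>) \<in> S2}
      + measure M {\<omega>\<in>space M. (aux n \<omega>, data n \<omega>) \<in> S3} + \<kappa>"
proof -
  interpret N: prob_space "sample n" by (rule prob_space_PiM) (simp add: prob_space_P)
  define e where "e S \<omega> = emeasure (sample n) (Pair (aux n \<omega>) -` S)" for S \<omega>
  have [measurable]: "e S \<in> borel_measurable M" if "S \<in> sets (Aux n \<Otimes>\<^sub>M sample n)" for S
    using measurable_compose[OF aux_rv N.measurable_emeasure_Pair[OF that]] by (simp add: e_def[abs_def])
  note [measurable] = S
  have "e S0 \<omega> \<le> e S1 \<omega> + e S2 \<omega> + e S3 \<omega> + \<kappa>" if "\<omega> \<in> space M" for \<omega>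
    using ennreal_leI[OF section_le[OF measurable_space[OF aux_rv that]]] \<kappa>
    by (simp add: e_def N.emeasure_eq_measure ennreal_plus)
  then have "emeasure M {\<omega>\<in>space M. (aux n \<omega>, data n \<omega>) \<in> S0} \<le> (\<integral>\<^sup>+\<omega>. e S1 \<omega> + e S2 \<omega> + e S3 \<omega> + \<kappa> \<partial>M)"
    unfolding emeasure_split[OF n S(1)] e_def[symmetric] by (intro nn_integral_mono) auto
  also have "\<dots> = (\<integral>\<^sup>+\<omega>. e S1 \<omega> \<partial>M) + (\<integral>\<^sup>+\<omega>. e S2 \<omega> \<partial>M) + (\<integral>\<^sup>+\<omega>. e S3 \<omega> \<partial>M) + \<kappa>"
    by (simp add: nn_integral_add M.emeasure_space_1)
  also have "\<dots> = ennreal (measure M {\<omega>\<in>space M. (aux n \<omega>, data n \<omega>) \<in> S1}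
      + measure M {\<omega>\<in>space M. (aux n \<omega>, data n \<omega>) \<in> S2}
      + measure M {\<omega>\<in>space M. (aux n \<omega>, data n \<omega>) \<in> S3} + \<kappa>)"
    using \<kappa> by (simp add: e_def emeasure_split[OF n S(2), symmetric] emeasure_split[OF n S(3), symmetric]
        emeasure_split[OF n S(4), symmetric] M.emeasure_eq_measure ennreal_plus)
  finally show ?thesis
    using \<kappa> by (simp only: M.emeasure_eq_measure) (simp add: ennreal_le_iff del: ennreal_plus)
qed

lemma measure_Tstat_small_split_le:
  assumes n: "2 \<le> n" and L: "0 < L" and c: "0 < c" and \<mu>: "\<mu> \<noteq> 0"
    and n_large: "8 * C \<le> sqrt n * \<bar>\<mu>\<bar>" "16 * c^2 * C^2 * (3 * L + 1) \<le> n * \<mu>^2"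
  shows "measure M {\<omega>\<in>space M. \<bar>Tstat n (Rvec (F n (aux n \<omega>)) (G n (aux n \<omega>)) W j l (\<lambda>i. D n i \<omega>))\<bar> < c}
    \<le> measure M {\<omega>\<in>space M. 1 < Berr n f (F n (aux n \<omega>)) v (\<lambda>i. Z (D n i \<omega>))}
      + measure M {\<omega>\<in>space M. 1 < Berr n g (G n (aux n \<omega>)) u (\<lambda>i. Z (D n i \<omega>))}
      + measure M {\<omega>\<in>space M. 1 < n * (Aerr n f (F n (aux n \<omega>)) (\<lambda>i. Z (D n i \<omega>))
                                        * Aerr n g (G n (aux n \<omega>)) (\<lambda>i. Z (D n i \<omega>)))}
      + ((64 * \<sigma>2 + 128 * C^2) / (n * \<mu>^2) + (\<tau>2 + 2) / L)"
proof -
  let ?AN = "Aux n \<Otimes>\<^sub>M sample n"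
  define S0 where "S0 = {p\<in>space ?AN. \<bar>Tstat n (Rvec (F n (fst p)) (G n (fst p)) W j l (snd p))\<bar> < c}"
  define S1 where "S1 = {p\<in>space ?AN. 1 < Berr n f (F n (fst p)) v (\<lambda>i. Z (snd p i))}"
  define S2 where "S2 = {p\<in>space ?AN. 1 < Berr n g (G n (fst p)) u (\<lambda>i. Z (snd p i))}"
  define S3 where "S3 = {p\<in>space ?AN. 1 < n * (Aerr n f (F n (fst p)) (\<lambda>i. Z (snd p i))
                                             * Aerr n g (G n (fst p)) (\<lambda>i. Z (snd p i)))}"
  have [measurable]: "(\<lambda>p. F n (fst p) (Z (snd p i))) \<in> borel_measurable ?AN"
      "(\<lambda>p. G n (fst p) (Z (snd p i))) \<in> borel_measurable ?AN" if "i < n" for i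
    using that by (auto intro!: measurable_case_prod_compose[OF F_measurable] measurable_case_prod_compose[OF G_measurable])
  have sets: "S0 \<in> sets ?AN" "S1 \<in> sets ?AN" "S2 \<in> sets ?AN" "S3 \<in> sets ?AN"
    unfolding S0_def S1_def S2_def S3_def Tstat_def Rbar_def Rvec_def Berr_def Aerr_def by measurable
  have bound: "measure M {\<omega>\<in>space M. (aux n \<omega>, data n \<omega>) \<in> S0}
    \<le> measure M {\<omega>\<in>space M. (aux n \<omega>, data n \<omega>) \<in> S1} + measure M {\<omega>\<in>space M. (aux n \<omega>, data n \<omega>) \<in> S2}
      + measure M {\<omega>\<in>space M. (aux n \<omega>, data n \<omega>) \<in> S3} + ((64 * \<sigma>2 + 128 * C^2) / (n * \<mu>^2) + (\<tau>2 + 2) / L)"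
  proof (rule measure_split_le[OF _ sets])
    fix a assume a: "a \<in> space (Aux n)"
    have "F n a \<in> borel_measurable borel" "G n a \<in> borel_measurable borel"
      using measurable_compose[OF measurable_Pair1'[OF a] F_measurable]
        measurable_compose[OF measurable_Pair1'[OF a] G_measurable] by simp_all
    from measure_Tstat_small_le[OF this n L c \<mu> n_large] a
    show "measure (sample n) (Pair a -` S0) \<le> measure (sample n) (Pair a -` S1)
        + measure (sample n) (Pair a -` S2) + measure (sample n) (Pair a -` S3)
        + ((64 * \<sigma>2 + 128 * C^2) / (n * \<mu>^2) + (\<tau>2 + 2) / L)"
      by (simp add: S0_def S1_def S2_def S3_def space_pair_measure)
  next
    have "0 \<le> \<sigma>2" "0 \<le> \<tau>2" unfolding \<sigma>2_def \<tau>2_def by simp_all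
    then show "0 \<le> (64 * \<sigma>2 + 128 * C^2) / (n * \<mu>^2) + (\<tau>2 + 2) / L" using L by simp
  qed (use n in simp)
  have "(aux n \<omega>, data n \<omega>) \<in> space ?AN" if "\<omega> \<in> space M" for \<omega>
    using measurable_space[OF aux_rv that] measurable_space[OF data_measurable that] by (simp add: space_pair_measure)
  moreover have "Tstat n (Rvec \<phi> \<gamma> W j l (data n \<omega>)) = Tstat n (Rvec \<phi> \<gamma> W j l (\<lambda>i. D n i \<omega>))"
      "Berr n h \<phi> q (\<lambda>i. Z (data n \<omega> i)) = Berr n h \<phi> q (\<lambda>i. Z (D n i \<omega>))"
      "Aerr n h \<phi> (\<lambda>i. Z (data n \<omega> i)) = Aerr n h \<phi> (\<lambda>i. Z (D n i \<omega>))" for \<phi> \<gamma> h q \<omega>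
    by (auto intro: Tstat_cong Berr_cong Aerr_cong simp: Rvec_def)
  ultimately have "{\<omega>\<in>space M. (aux n \<omega>, data n \<omega>) \<in> S0}
      = {\<omega>\<in>space M. \<bar>Tstat n (Rvec (F n (aux n \<omega>)) (G n (aux n \<omega>)) W j l (\<lambda>i. D n i \<omega>))\<bar> < c}"
    "{\<omega>\<in>space M. (aux n \<omega>, data n \<omega>) \<in> S1} = {\<omega>\<in>space M. 1 < Berr n f (F n (aux n \<omega>)) v (\<lambda>i. Z (D n i \<omega>))}"
    "{\<omega>\<in>space M. (aux n \<omega>, data n \<omega>) \<in> S2} = {\<omega>\<in>space M. 1 < Berr n g (G n (aux n \<omega>)) u (\<lambda>i. Z (D n i \<omega>))}"
    "{\<omega>\<in>space M. (aux n \<omega>, data n \<omega>) \<in> S3} = {\<omega>\<in>space M. 1 < n * (Aerr n f (F n (aux n \<omega>)) (\<lambda>i. Z (D n i \<omega>))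
                                        * Aerr n g (G n (aux n \<omega>)) (\<lambda>i. Z (D n i \<omega>)))}"
    by (auto simp: S0_def S1_def S2_def S3_def)
  then show ?thesis using bound by simp
qed

lemma Tstat_small_tendsto_0:
  assumes \<mu>: "\<mu> \<noteq> 0" and c: "0 < c"
  shows "(\<lambda>n. measure M {\<omega>\<in>space M. \<bar>Tstat n (Rvec (F n (aux n \<omega>)) (G n (aux n \<omega>)) W j l (\<lambda>i. D n i \<omega>))\<bar> < c})
    \<longlonglongrightarrow> 0"
proof (rule order_tendstoI)
  fix r :: real assume r: "0 < r"
  define L where "L = 4 * (\<tau>2 + 2) / r + 1"
  have \<tau>2: "0 \<le> \<tau>2" unfolding \<tau>2_def by simp
  have L: "0 < L" using r \<tau>2 by (simp add: L_def add_nonneg_pos)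
  have r8: "0 < r / 8" using r by simp
  have L_small: "(\<tau>2 + 2) / L < r / 4"
    using r L \<tau>2 by (simp add: L_def field_simps)
  have rate_f: "(\<lambda>n. measure M {\<omega>\<in>space M. 1 < Berr n f (F n (aux n \<omega>)) v (\<lambda>i. Z (D n i \<omega>))}) \<longlonglongrightarrow> 0"
    using Bf[unfolded oP_def, rule_format, OF zero_less_one] by (simp add: Berr_nonneg[OF v_nonneg])
  have rate_g: "(\<lambda>n. measure M {\<omega>\<in>space M. 1 < Berr n g (G n (aux n \<omega>)) u (\<lambda>i. Z (D n i \<omega>))}) \<longlonglongrightarrow> 0"
    using Bg[unfolded oP_def, rule_format, OF zero_less_one] by (simp add: Berr_nonneg[OF u_nonneg])
  have rate_A: "(\<lambda>n. measure M {\<omega>\<in>space M. 1 < n * (Aerr n f (F n (aux n \<omega>)) (\<lambda>i. Z (D n i \<omega>))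
      * Aerr n g (G n (aux n \<omega>)) (\<lambda>i. Z (D n i \<omega>)))}) \<longlonglongrightarrow> 0"
    using A_rate[unfolded oP_def, rule_format, OF zero_less_one] by (simp add: Aerr_nonneg abs_mult mult.commute)
  have "(\<lambda>n. (64 * \<sigma>2 + 128 * C^2) / \<mu>^2 * inverse (real n)) \<longlonglongrightarrow> 0"
    by (rule tendsto_mult_right_zero[OF lim_inverse_n])
  then have rate_K: "(\<lambda>n. (64 * \<sigma>2 + 128 * C^2) / (n * \<mu>^2)) \<longlonglongrightarrow> 0"
    by (simp add: divide_inverse mult_ac)
  have "\<forall>\<^sub>F n in sequentially. 8 * C / \<bar>\<mu>\<bar> \<le> sqrt (real n)"
    using filterlim_compose[OF sqrt_at_top filterlim_real_sequentially] by (simp add: filterlim_at_top)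
  moreover have "\<forall>\<^sub>F n in sequentially. 16 * c^2 * C^2 * (3 * L + 1) / \<mu>^2 \<le> real n"
    using filterlim_real_sequentially by (simp add: filterlim_at_top)
  ultimately show "\<forall>\<^sub>F n in sequentially. measure M {\<omega>\<in>space M.
      \<bar>Tstat n (Rvec (F n (aux n \<omega>)) (G n (aux n \<omega>)) W j l (\<lambda>i. D n i \<omega>))\<bar> < c} < r"
    using eventually_ge_at_top[of 2] order_tendstoD(2)[OF rate_f r8] order_tendstoD(2)[OF rate_g r8]
      order_tendstoD(2)[OF rate_A r8] order_tendstoD(2)[OF rate_K r8]
  proof eventually_elim
    case (elim n)
    have "8 * C \<le> sqrt n * \<bar>\<mu>\<bar>" "16 * c^2 * C^2 * (3 * L + 1) \<le> n * \<mu>^2"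
      using elim(1,2) \<mu> by (simp_all add: pos_divide_le_eq)
    from measure_Tstat_small_split_le[OF elim(3) L c \<mu> this] show ?case
      using elim(4-7) L_small r by linarith
  qed
qed (auto intro!: always_eventually less_le_trans[OF _ measure_nonneg])

end

section \<open>The maximum statistic\<close>

lemma Sstat_eq_Max:
  "Sstat n w K F G d = Max ((\<lambda>(j, l, k). \<bar>Tstat n (Rvec (F j) (G l) (w j l k) j l d)\<bar>)
     ` (SIGMA j:UNIV. SIGMA l:UNIV. {1..K j l}))"
  unfolding Sstat_def by (rule arg_cong[where f = Max]) force

lemma Tstat_le_Sstat:
  fixes F :: "'dx::finite \<Rightarrow> real^'dz::finite \<Rightarrow> real" and G :: "'dy::finite \<Rightarrow> real^'dz \<Rightarrow> real"
  assumes "k \<in> {1..K j l}"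
  shows "\<bar>Tstat n (Rvec (F j) (G l) (w j l k) j l d)\<bar> \<le> Sstat n w K F G d"
  unfolding Sstat_eq_Max using assms by (intro Max_ge finite_imageI finite_SigmaI) force+

lemma Tstat_split_measurable:
  fixes D :: "nat \<Rightarrow> 'o \<Rightarrow> ('dx::finite, 'dy::finite, 'dz::finite) obs"
  assumes D[measurable]: "\<And>i. i < n \<Longrightarrow> D i \<in> borel_measurable M"
    and [measurable]: "W \<in> borel_measurable borel"
    and aux[measurable]: "aux \<in> measurable M A"
    and F: "(\<lambda>(a, z). F a z) \<in> borel_measurable (A \<Otimes>\<^sub>M borel)"
    and G: "(\<lambda>(a, z). G a z) \<in> borel_measurable (A \<Otimes>\<^sub>M borel)"
  shows "(\<lambda>\<omega>. Tstat n (Rvec (F (aux \<omega>)) (G (aux \<omega>)) W j l (\<lambda>i. D i \<omega>))) \<in> borel_measurable M"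
proof -
  have "continuous_on UNIV (\<lambda>t::('dx, 'dy, 'dz) obs. fst t $ j)"
      "continuous_on UNIV (\<lambda>t::('dx, 'dy, 'dz) obs. fst (snd t) $ l)"
      "continuous_on UNIV (\<lambda>t::('dx, 'dy, 'dz) obs. snd (snd t))"
    by (intro continuous_intros)+
  note cont = this[THEN borel_measurable_continuous_onI]
  have [measurable]: "(\<lambda>\<omega>. fst (D i \<omega>) $ j) \<in> borel_measurable M"
      "(\<lambda>\<omega>. fst (snd (D i \<omega>)) $ l) \<in> borel_measurable M" if "i < n" for i
    using measurable_compose[OF D[OF that] cont(1)] measurable_compose[OF D[OF that] cont(2)] by simp_all
  have Z[measurable]: "(\<lambda>\<omega>. snd (snd (D i \<omega>))) \<in> borel_measurable M" if "i < n" for i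
    using measurable_compose[OF D[OF that] cont(3)] by simp
  have [measurable]: "(\<lambda>\<omega>. F (aux \<omega>) (snd (snd (D i \<omega>)))) \<in> borel_measurable M"
    "(\<lambda>\<omega>. G (aux \<omega>) (snd (snd (D i \<omega>)))) \<in> borel_measurable M" if "i < n" for i
    using measurable_case_prod_compose[OF F aux Z[OF that]] measurable_case_prod_compose[OF G aux Z[OF that]]
    by simp_all
  show ?thesis unfolding Tstat_def Rbar_def Rvec_def by measurable
qed

lemma Sstat_split_measurable:
  fixes D :: "nat \<Rightarrow> 'o \<Rightarrow> ('dx::finite, 'dy::finite, 'dz::finite) obs"
  assumes D: "\<And>i. i < n \<Longrightarrow> D i \<in> borel_measurable M" and aux: "aux \<in> measurable M A"
    and F: "\<And>j. (\<lambda>(a, z). F j a z) \<in> borel_measurable (A \<Otimes>\<^sub>M borel)"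
    and G: "\<And>l. (\<lambda>(a, z). G l a z) \<in> borel_measurable (A \<Otimes>\<^sub>M borel)"
    and w: "\<And>j l k. w j l k \<in> borel_measurable borel"
  shows "(\<lambda>\<omega>. Sstat n w K (\<lambda>j. F j (aux \<omega>)) (\<lambda>l. G l (aux \<omega>)) (\<lambda>i. D i \<omega>)) \<in> borel_measurable M"
  unfolding Sstat_eq_Max
  by (intro borel_measurable_Max finite_SigmaI)
     (auto intro: borel_measurable_abs Tstat_split_measurable[OF D w aux F G])

lemma measure_Sstat_ge_tendsto_1:
  fixes D :: "nat \<Rightarrow> nat \<Rightarrow> 'o \<Rightarrow> ('dx::finite, 'dy::finite, 'dz::finite) obs"
    and F :: "nat \<Rightarrow> 'dx \<Rightarrow> 'a \<Rightarrow> real^'dz \<Rightarrow> real" and G :: "nat \<Rightarrow> 'dy \<Rightarrow> 'a \<Rightarrow> real^'dz \<Rightarrow> real"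
  assumes M: "prob_space M"
    and D: "\<And>n i. i < n \<Longrightarrow> D n i \<in> borel_measurable M" and aux: "\<And>n. aux n \<in> measurable M (Aux n)"
    and F: "\<And>n j. (\<lambda>(a, z). F n j a z) \<in> borel_measurable (Aux n \<Otimes>\<^sub>M borel)"
    and G: "\<And>n l. (\<lambda>(a, z). G n l a z) \<in> borel_measurable (Aux n \<Otimes>\<^sub>M borel)"
    and w: "\<And>j l k. w j l k \<in> borel_measurable borel"
    and k: "k \<in> {1..K j l}"
    and small: "(\<lambda>n. measure M {\<omega>\<in>space M.
      \<bar>Tstat n (Rvec (F n j (aux n \<omega>)) (G n l (aux n \<omega>)) (w j l k) j l (\<lambda>i. D n i \<omega>))\<bar> < c}) \<longlonglongrightarrow> 0"
  shows "(\<lambda>n. measure M {\<omega>\<in>space M.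
      c \<le> Sstat n w K (\<lambda>j. F n j (aux n \<omega>)) (\<lambda>l. G n l (aux n \<omega>)) (\<lambda>i. D n i \<omega>)}) \<longlonglongrightarrow> 1"
proof -
  interpret M: prob_space M by (fact M)
  define T where "T n \<omega> = \<bar>Tstat n (Rvec (F n j (aux n \<omega>)) (G n l (aux n \<omega>)) (w j l k) j l (\<lambda>i. D n i \<omega>))\<bar>"
    for n \<omega>
  define S where "S n \<omega> = Sstat n w K (\<lambda>j. F n j (aux n \<omega>)) (\<lambda>l. G n l (aux n \<omega>)) (\<lambda>i. D n i \<omega>)" for n \<omega>
  have lower: "1 - measure M {\<omega>\<in>space M. T n \<omega> < c} \<le> measure M {\<omega>\<in>space M. c \<le> S n \<omega>}" for n
  proof -
    have [measurable]: "T n \<in> borel_measurable M" "S n \<in> borel_measurable M"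
      unfolding T_def[abs_def] S_def[abs_def]
      using Tstat_split_measurable[OF D w aux F G] Sstat_split_measurable[OF D aux F G w] by measurable
    have T_S: "T n \<omega> \<le> S n \<omega>" for \<omega>
      unfolding T_def S_def
      by (rule Tstat_le_Sstat[where F = "\<lambda>j. F n j (aux n \<omega>)" and G = "\<lambda>l. G n l (aux n \<omega>)"
            and K = K and j = j and l = l, OF k])
    have "space M - {\<omega>\<in>space M. T n \<omega> < c} \<subseteq> {\<omega>\<in>space M. c \<le> S n \<omega>}"
      by (auto simp: not_less intro: order_trans[OF _ T_S])
    then have "measure M (space M - {\<omega>\<in>space M. T n \<omega> < c}) \<le> measure M {\<omega>\<in>space M. c \<le> S n \<omega>}"
      by (rule M.finite_measure_mono) measurable
    then show ?thesis by (subst (asm) M.prob_compl) measurable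
  qed
  show ?thesis
  proof (rule tendsto_sandwich[where f = "\<lambda>n. 1 - measure M {\<omega>\<in>space M. T n \<omega> < c}" and h = "\<lambda>_. 1"])
    show "(\<lambda>n. 1 - measure M {\<omega>\<in>space M. T n \<omega> < c}) \<longlonglongrightarrow> 1"
      using tendsto_diff[OF tendsto_const small[folded T_def], of 1] by simp
  qed (intro always_eventually allI lower[unfolded S_def] M.prob_le_1 tendsto_const)+
qed

theorem corollary3:
  fixes M :: "'o measure"
    and P :: "('dx::finite, 'dy::finite, 'dz::finite) obs measure"
    and D :: "nat \<Rightarrow> nat \<Rightarrow> 'o \<Rightarrow> ('dx, 'dy, 'dz) obs"
    and Aux :: "nat \<Rightarrow> 'a measure"
    and aux :: "nat \<Rightarrow> 'o \<Rightarrow> 'a"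
    and F :: "nat \<Rightarrow> 'dx \<Rightarrow> 'a \<Rightarrow> real^'dz \<Rightarrow> real"
    and G :: "nat \<Rightarrow> 'dy \<Rightarrow> 'a \<Rightarrow> real^'dz \<Rightarrow> real"
    and f u :: "'dx \<Rightarrow> real^'dz \<Rightarrow> real"
    and g v :: "'dy \<Rightarrow> real^'dz \<Rightarrow> real"
    and w :: "'dx \<Rightarrow> 'dy \<Rightarrow> nat \<Rightarrow> real^'dz \<Rightarrow> real"
    and K :: "'dx \<Rightarrow> 'dy \<Rightarrow> nat"
    and C :: real
  assumes M: "prob_space M"
    and P: "prob_space P" "sets P = sets borel" "absolutely_continuous lborel P"
    and data_rv: "\<And>n i. i < n \<Longrightarrow> D n i \<in> borel_measurable M"
    and data_dist: "\<And>n i. i < n \<Longrightarrow> distr M borel (D n i) = P"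
    and data_indep: "\<And>n. prob_space.indep_vars M (\<lambda>_. borel) (D n) {..<n}"
    and aux_rv: "\<And>n. aux n \<in> measurable M (Aux n)"
    and aux_indep: "\<And>n A B. A \<in> sets (Aux n) \<Longrightarrow> B \<in> sets (PiM {..<n} (\<lambda>_. borel)) \<Longrightarrow>
          measure M {\<omega>\<in>space M. aux n \<omega> \<in> A \<and> (\<lambda>i\<in>{..<n}. D n i \<omega>) \<in> B}
        = measure M {\<omega>\<in>space M. aux n \<omega> \<in> A} * measure M {\<omega>\<in>space M. (\<lambda>i\<in>{..<n}. D n i \<omega>) \<in> B}"
    and F_meas: "\<And>n j. (\<lambda>(a, z). F n j a z) \<in> borel_measurable (Aux n \<Otimes>\<^sub>M borel)"
    and G_meas: "\<And>n l. (\<lambda>(a, z). G n l a z) \<in> borel_measurable (Aux n \<Otimes>\<^sub>M borel)"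
    and f: "\<And>j. regr_fun P (\<lambda>t. snd (snd t)) (\<lambda>t. fst t $ j) (f j)"
    and g: "\<And>l. regr_fun P (\<lambda>t. snd (snd t)) (\<lambda>t. fst (snd t) $ l) (g l)"
    and u: "\<And>j. nn_regr_fun P (\<lambda>t. snd (snd t))
                 (\<lambda>t. (fst t $ j - f j (snd (snd t)))^2) (u j)"
    and v: "\<And>l. nn_regr_fun P (\<lambda>t. snd (snd t))
                 (\<lambda>t. (fst (snd t) $ l - g l (snd (snd t)))^2) (v l)"
    and w_meas: "\<And>j l k. w j l k \<in> borel_measurable borel"
    and C: "C > 0" "\<And>j l k z. \<bar>w j l k z\<bar> \<le> C"
    and A_rate: "\<And>j l. oP M (\<lambda>n \<omega>.
          Aerr n (f j) (F n j (aux n \<omega>)) (\<lambda>i. snd (snd (D n i \<omega>)))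
        * Aerr n (g l) (G n l (aux n \<omega>)) (\<lambda>i. snd (snd (D n i \<omega>)))) (\<lambda>n. 1 / real n)"
    and Bf: "\<And>j l. oP M (\<lambda>n \<omega>.
          Berr n (f j) (F n j (aux n \<omega>)) (v l) (\<lambda>i. snd (snd (D n i \<omega>)))) (\<lambda>n. 1)"
    and Bg: "\<And>j l. oP M (\<lambda>n \<omega>.
          Berr n (g l) (G n l (aux n \<omega>)) (u j) (\<lambda>i. snd (snd (D n i \<omega>)))) (\<lambda>n. 1)"
    and pos: "\<And>j l k. k \<in> {1..K j l} \<Longrightarrow>
          (\<integral>\<^sup>+t. ennreal ((fst t $ j - f j (snd (snd t)))^2 * (fst (snd t) $ l - g l (snd (snd t)))^2
                          * (w j l k (snd (snd t)))^2) \<partial>P) > 0"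
    and fin: "\<And>j l.
          (\<integral>\<^sup>+t. ennreal ((fst t $ j - f j (snd (snd t)))^2 * (fst (snd t) $ l - g l (snd (snd t)))^2) \<partial>P) < \<infinity>"
    and alt: "\<exists>j l. \<exists>k\<in>{1..K j l}.
          (\<integral>t. (fst t $ j - f j (snd (snd t))) * (fst (snd t) $ l - g l (snd (snd t)))
                 * w j l k (snd (snd t)) \<partial>P) \<noteq> 0"
  shows "\<forall>c>0. (\<lambda>n. measure M {\<omega>\<in>space M.
            c \<le> Sstat n w K (\<lambda>j. F n j (aux n \<omega>)) (\<lambda>l. G n l (aux n \<omega>)) (\<lambda>i. D n i \<omega>)})
          \<longlonglongrightarrow> 1"
proof (intro allI impI)
  fix c :: real assume c: "0 < c"
  obtain j0 l0 k0 where k0: "k0 \<in> {1..K j0 l0}"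
    and alternative: "(\<integral>t. (fst t $ j0 - f j0 (snd (snd t))) * (fst (snd t) $ l0 - g l0 (snd (snd t)))
                 * w j0 l0 k0 (snd (snd t)) \<partial>P) \<noteq> 0"
    using alt by blast
  interpret sample_splitting P j0 l0 "f j0" "u j0" "g l0" "v l0" "w j0 l0 k0" C M D Aux aux
      "\<lambda>n. F n j0" "\<lambda>n. G n l0"
  proof (intro sample_splitting.intro residual_model.intro sample_splitting_axioms.intro)
    show "(\<integral>\<^sup>+t. ennreal ((fst t $ j0 - f j0 (snd (snd t)))^2 * (fst (snd t) $ l0 - g l0 (snd (snd t)))^2) \<partial>P) < \<infinity>"
      by (rule fin)
  qed (simp_all add: assms)
  have "\<mu> \<noteq> 0" using alternative by (simp add: \<mu>_def)
  note small = Tstat_small_tendsto_0[OF this c]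
  show "(\<lambda>n. measure M {\<omega>\<in>space M.
      c \<le> Sstat n w K (\<lambda>j. F n j (aux n \<omega>)) (\<lambda>l. G n l (aux n \<omega>)) (\<lambda>i. D n i \<omega>)}) \<longlonglongrightarrow> 1"
    by (rule measure_Sstat_ge_tendsto_1[where K = K and F = F and G = G and D = D and w = w,
          OF M data_rv aux_rv F_meas G_meas w_meas k0 small])
qed

end
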